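(* Let $\mathcal{U},\mathcal{Y}$ be Hilbert spaces, $\mathcal{F}$ a closed subspace of $\mathcal{U}$ with $\mathcal{F}\neq\mathcal{U}$, and $\omega=\begin{pmatrix}\omega_1\\ \omega_2\end{pmatrix}:\mathcal{F}\to\mathcal{Y}\oplus\mathcal{U}$ a contraction. Let $H_c(\lambda)=\omega_1\Pi_{\mathcal{F}}(I_{\mathcal{U}}-\lambda\omega_2\Pi_{\mathcal{F}})^{-1}$, $\lambda\in\mathbb{D}$ (the central solution). Then $H_c$ is the only solution to the $H^2$ interpolation problem defined by $\omega$ if and only if $\Gamma_{H_c}:\mathcal{U}\to H^2(\mathcal{Y})$ is a co-isometry.
   Context: $\Pi_{\mathcal{F}}:\mathcal{U}\to\mathcal{F}$ is the orthogonal projection, so $\omega_2\Pi_{\mathcal{F}}$ is a contraction on $\mathcal{U}$. $\mathfrak{H}^2(\mathcal{U},\mathcal{Y})$ denotes the set of functions $H$ on the open unit disc $\mathbb{D}$ with values bounded operators $\mathcal{U}\to\mathcal{Y}$ such that $(\Gamma_Hu)(\lambda)=H(\lambda)u$ defines a bounded operator $\Gamma_H:\mathcal{U}\to H^2(\mathcal{Y})$; it is normed by $\|H\|=\|\Gamma_H\|$, and $\mathfrak{H}^2_{\mathrm{ball}}(\mathcal{U},\mathcal{Y})$ is its closed unit ball. A solution to the $H^2$ interpolation problem defined by $\omega$ is an $H\in\mathfrak{H}^2_{\mathrm{ball}}(\mathcal{U},\mathcal{Y})$ with $\omega_1+\lambda H(\lambda)\omega_2=H(\lambda)|_{\mathcal{F}}$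 for all $\lambda\in\mathbb{D}$. (It is known that $H_c$ is such a solution.) *)

theory Defs
  imports "HOL-Analysis.Analysis"
begin

class complex_hilbert = real_normed_vector + complete_space +
  fixes scaleC :: "complex \<Rightarrow> 'a \<Rightarrow> 'a" (infixr \<open>*\<^sub>C\<close> 75)
  fixes cinner :: "'a \<Rightarrow> 'a \<Rightarrow> complex"
  assumes scaleC_add_right: "a *\<^sub>C (x + y) = a *\<^sub>C x + a *\<^sub>C y"
    and scaleC_add_left: "(a + b) *\<^sub>C x = a *\<^sub>C x + b *\<^sub>C x"
    and scaleC_scaleC: "a *\<^sub>C (b *\<^sub>C x) = (a * b) *\<^sub>C x"
    and scaleC_one: "1 *\<^sub>C x = x"
    and scaleC_of_real: "complex_of_real r *\<^sub>C x = scaleR r x"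
    and cinner_commute: "cinner x y = cnj (cinner y x)"
    and cinner_add_right: "cinner x (y + z) = cinner x y + cinner x z"
    and cinner_scaleC_right: "cinner x (a *\<^sub>C y) = a * cinner x y"
    and cinner_self_norm: "cinner x x = complex_of_real ((norm x)\<^sup>2)"

definition clinear_on :: "'a::complex_hilbert set \<Rightarrow> ('a \<Rightarrow> 'b::complex_hilbert) \<Rightarrow> bool" where
  "clinear_on S f \<longleftrightarrow> (\<forall>x\<in>S. \<forall>y\<in>S. f (x + y) = f x + f y) \<and>
                       (\<forall>c. \<forall>x\<in>S. f (c *\<^sub>C x) = c *\<^sub>C f x)"

definition bounded_clinear_op :: "('a::complex_hilbert \<Rightarrow> 'b::complex_hilbert) \<Rightarrow> bool" where
  "bounded_clinear_op f \<longleftrightarrow> clinear_on UNIV f \<and> (\<exists>K. \<forall>x. norm (f x) \<le> norm x * K)"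

definition csubspace :: "'a::complex_hilbert set \<Rightarrow> bool" where
  "csubspace S \<longleftrightarrow> 0 \<in> S \<and> (\<forall>x\<in>S. \<forall>y\<in>S. x + y \<in> S) \<and> (\<forall>c. \<forall>x\<in>S. c *\<^sub>C x \<in> S)"

definition orth_proj :: "'a::complex_hilbert set \<Rightarrow> 'a \<Rightarrow> 'a" where
  "orth_proj F x = (THE p. p \<in> F \<and> (\<forall>f\<in>F. cinner f (x - p) = 0))"

definition h2_coeffs :: "(complex \<Rightarrow> 'y::complex_hilbert) \<Rightarrow> (nat \<Rightarrow> 'y) \<Rightarrow> bool" where
  "h2_coeffs f a \<longleftrightarrow> summable (\<lambda>n. (norm (a n))\<^sup>2) \<and>
      (\<forall>z\<in>ball 0 1. (\<lambda>n. (z ^ n) *\<^sub>C a n) sums f z)"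

definition in_H2 :: "(complex \<Rightarrow> 'y::complex_hilbert) \<Rightarrow> bool" where
  "in_H2 f \<longleftrightarrow> (\<exists>a. h2_coeffs f a)"

definition h2_coeff :: "(complex \<Rightarrow> 'y::complex_hilbert) \<Rightarrow> nat \<Rightarrow> 'y" where
  "h2_coeff f = (THE a. h2_coeffs f a)"

definition h2_inner :: "(complex \<Rightarrow> 'y::complex_hilbert) \<Rightarrow> (complex \<Rightarrow> 'y) \<Rightarrow> complex" where
  "h2_inner f g = (\<Sum>n. cinner (h2_coeff f n) (h2_coeff g n))"

definition h2_norm :: "(complex \<Rightarrow> 'y::complex_hilbert) \<Rightarrow> real" where
  "h2_norm f = sqrt (\<Sum>n. (norm (h2_coeff f n))\<^sup>2)"

definition Gamma :: "(complex \<Rightarrow> 'u::complex_hilbert \<Rightarrow> 'y::complex_hilbert) \<Rightarrow> 'u \<Rightarrow> complex \<Rightarrow> 'y" where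
  "Gamma H u = (\<lambda>z. H z u)"

definition in_frakH2 :: "(complex \<Rightarrow> 'u::complex_hilbert \<Rightarrow> 'y::complex_hilbert) \<Rightarrow> bool" where
  "in_frakH2 H \<longleftrightarrow> (\<forall>z\<in>ball 0 1. bounded_clinear_op (H z)) \<and>
     (\<forall>u. in_H2 (Gamma H u)) \<and> (\<exists>C. \<forall>u. h2_norm (Gamma H u) \<le> C * norm u)"

definition in_frakH2_ball :: "(complex \<Rightarrow> 'u::complex_hilbert \<Rightarrow> 'y::complex_hilbert) \<Rightarrow> bool" where
  "in_frakH2_ball H \<longleftrightarrow> in_frakH2 H \<and> (\<forall>u. h2_norm (Gamma H u) \<le> norm u)"

text \<open>Gamma_H is a co-isometry: it has an adjoint A : H^2(Y) \<rightarrow> U with Gamma_H A = I on H^2(Y)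
  (functions in H^2 are identified when they agree on the disc).\<close>
definition Gamma_coisometry :: "(complex \<Rightarrow> 'u::complex_hilbert \<Rightarrow> 'y::complex_hilbert) \<Rightarrow> bool" where
  "Gamma_coisometry H \<longleftrightarrow> in_frakH2 H \<and>
     (\<exists>A :: (complex \<Rightarrow> 'y) \<Rightarrow> 'u.
        (\<forall>g u. in_H2 g \<longrightarrow> h2_inner (Gamma H u) g = cinner u (A g)) \<and>
        (\<forall>g. in_H2 g \<longrightarrow> (\<forall>z\<in>ball 0 1. Gamma H (A g) z = g z)))"

definition H2_interp_solution ::
  "'u::complex_hilbert set \<Rightarrow> ('u \<Rightarrow> 'y::complex_hilbert) \<Rightarrow> ('u \<Rightarrow> 'u) \<Rightarrow> (complex \<Rightarrow> 'u \<Rightarrow> 'y) \<Rightarrow> bool" where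
  "H2_interp_solution F \<omega>1 \<omega>2 H \<longleftrightarrow> in_frakH2_ball H \<and>
     (\<forall>z\<in>ball 0 1. \<forall>x\<in>F. \<omega>1 x + z *\<^sub>C H z (\<omega>2 x) = H z x)"

definition central_solution ::
  "'u::complex_hilbert set \<Rightarrow> ('u \<Rightarrow> 'y::complex_hilbert) \<Rightarrow> ('u \<Rightarrow> 'u) \<Rightarrow> complex \<Rightarrow> 'u \<Rightarrow> 'y" where
  "central_solution F \<omega>1 \<omega>2 z u =
     \<omega>1 (orth_proj F (THE v. v - z *\<^sub>C \<omega>2 (orth_proj F v) = u))"

end

theory Submission
  imports Defs
begin

text \<open>Write h_n and c_n for the Taylor coefficients of a solution H and of the central
  solution H_c. The interpolation condition says h_0 = \<omega>1 and h_{n+1} = h_n \<omega>2 on F, and the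
  same holds for c_n; hence h_n = c_n on the vectors at which \<Gamma>_{H_c} is isometric, a set that
  \<omega>2 maps into itself. If \<Gamma>_{H_c} is a co-isometry, every vector is such a vector plus an
  element of ker \<Gamma>_{H_c}, and contractivity of \<Gamma>_H forces \<Gamma>_H to vanish on ker \<Gamma>_{H_c};
  hence H = H_c.
  Conversely, on coefficient sequences the adjoint X of \<Gamma>_{H_c} obeys the recursion
  X \<gamma> = \<omega>'(\<gamma>_0, X (S' \<gamma>)), with \<omega>' the adjoint of \<omega> and S' the backward shift, so
  \<Gamma>_{H_c} is a co-isometry as soon as \<omega>' is isometric on every pair (\<gamma>_0, X (S' \<gamma>)).
  If it is not isometric at some pair, its defect yields a contractive rank-one extension of
  \<omega> to a unit vector orthogonal to F (this is where F \<noteq> U is used), and the transfer function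
  of that extension is a second solution.\<close>

instance complex_hilbert \<subseteq> banach ..

lemma cinner_add_left: "cinner (x + y) z = cinner x z + cinner y z"
proof -
  have "cinner (x + y) z = cnj (cinner z x + cinner z y)"
    by (simp only: cinner_commute[of "x+y" z] cinner_add_right)
  also have "\<dots> = cinner x z + cinner y z"
    by (simp only: complex_cnj_add cinner_commute[of x z] cinner_commute[of y z] complex_cnj_cnj)
  finally show ?thesis .
qed

lemma cinner_scaleC_left: "cinner (a *\<^sub>C x) y = cnj a * cinner x y"
proof -
  have "cinner (a *\<^sub>C x) y = cnj (a * cinner y x)"
    by (simp only: cinner_commute[of "a *\<^sub>C x" y] cinner_scaleC_right)
  also have "\<dots> = cnj a * cinner x y"
    by (simp only: complex_cnj_mult cinner_commute[of x y] complex_cnj_cnj)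
  finally show ?thesis .
qed

lemma cinner_zero_right [simp]: "cinner x 0 = 0"
  using cinner_add_right[of x 0 0] by simp

lemma cinner_zero_left [simp]: "cinner 0 x = 0"
  using cinner_add_left[of 0 0 x] by simp

lemma cinner_eq_zero_sym: "cinner x y = 0 \<longleftrightarrow> cinner y x = 0"
  by (metis cinner_commute complex_cnj_zero)

lemma scaleR_as_scaleC: "scaleR r x = complex_of_real r *\<^sub>C x"
  by (simp add: scaleC_of_real)

lemma scaleC_zero_left [simp]: "0 *\<^sub>C x = 0"
  using scaleC_of_real[of 0 x] by simp

lemma scaleC_zero_right [simp]: "a *\<^sub>C 0 = 0"
  using scaleC_add_right[of a 0 0] by simp

lemma minus_as_scaleC: "- x = (-1) *\<^sub>C x"
  using scaleC_of_real[of "-1" x] by simp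

lemma scaleC_minus_right: "a *\<^sub>C (- x) = - (a *\<^sub>C x)"
  by (simp only: minus_as_scaleC[of x] minus_as_scaleC[of "a *\<^sub>C x"] scaleC_scaleC mult.commute)

lemma scaleC_diff_right: "a *\<^sub>C (x - y) = a *\<^sub>C x - a *\<^sub>C y"
  by (simp only: diff_conv_add_uminus scaleC_add_right scaleC_minus_right)

lemma cinner_minus_right: "cinner x (- y) = - cinner x y"
  by (simp add: minus_as_scaleC[of y] cinner_scaleC_right)

lemma cinner_minus_left: "cinner (- x) y = - cinner x y"
  by (simp add: minus_as_scaleC[of x] cinner_scaleC_left)

lemma cinner_diff_right: "cinner x (y - z) = cinner x y - cinner x z"
  by (simp only: diff_conv_add_uminus cinner_add_right cinner_minus_right)

lemma cinner_diff_left: "cinner (x - y) z = cinner x z - cinner y z"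
  by (simp only: diff_conv_add_uminus cinner_add_left cinner_minus_left)

lemma norm_sq_cinner: "(norm x)\<^sup>2 = Re (cinner x x)"
  by (simp add: cinner_self_norm)

lemma cinner_self_eq_zero [simp]: "cinner x x = 0 \<longleftrightarrow> x = 0"
  by (simp add: cinner_self_norm)

lemma cnj_mult_self: "cnj a * a = complex_of_real ((cmod a)\<^sup>2)"
  by (subst mult.commute) (rule complex_norm_square[symmetric])

lemma norm_scaleC: "norm (a *\<^sub>C x) = cmod a * norm x"
proof -
  have "(norm (a *\<^sub>C x))\<^sup>2 = Re (cnj a * a * cinner x x)"
    by (simp only: norm_sq_cinner cinner_scaleC_left cinner_scaleC_right mult.assoc
        mult.left_commute)
  also have "\<dots> = (cmod a)\<^sup>2 * (norm x)\<^sup>2"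
    unfolding cnj_mult_self cinner_self_norm
    by (simp only: Re_complex_of_real of_real_mult[symmetric])
  finally have "(norm (a *\<^sub>C x))\<^sup>2 = (cmod a * norm x)\<^sup>2" by (simp add: power_mult_distrib)
  then show ?thesis by (simp add: power2_eq_iff_nonneg)
qed

lemma norm_add_sq: "(norm (x + y))\<^sup>2 = (norm x)\<^sup>2 + 2 * Re (cinner x y) + (norm y)\<^sup>2"
proof -
  have "(norm (x + y))\<^sup>2 = Re (cinner x x + cinner x y + cinner y x + cinner y y)"
    by (simp add: norm_sq_cinner cinner_add_left cinner_add_right)
  also have "\<dots> = (norm x)\<^sup>2 + 2 * Re (cinner x y) + (norm y)\<^sup>2"
    by (simp add: norm_sq_cinner cinner_commute[of y x])
  finally show ?thesis .
qed

lemma norm_diff_sq: "(norm (x - y))\<^sup>2 = (norm x)\<^sup>2 - 2 * Re (cinner x y) + (norm y)\<^sup>2"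
  using norm_add_sq[of x "- y"] by (simp add: cinner_minus_right)

lemma norm_add_scaleC_sq:
  "(norm (x + t *\<^sub>C y))\<^sup>2 = (norm x)\<^sup>2 + 2 * Re (t * cinner x y) + (cmod t)\<^sup>2 * (norm y)\<^sup>2"
  by (simp add: norm_add_sq cinner_scaleC_right norm_scaleC power_mult_distrib)

lemma norm_diff_scaleC_sq:
  "(norm (x - t *\<^sub>C y))\<^sup>2 = (norm x)\<^sup>2 - 2 * Re (t * cinner x y) + (cmod t)\<^sup>2 * (norm y)\<^sup>2"
  by (simp add: norm_diff_sq cinner_scaleC_right norm_scaleC power_mult_distrib)

lemma norm_le_if_sq_add_le:
  assumes "(norm x)\<^sup>2 + r \<le> (norm u)\<^sup>2" "0 \<le> r"
  shows "norm x \<le> norm u"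
proof -
  have "(norm x)\<^sup>2 \<le> (norm u)\<^sup>2" using assms by linarith
  then show ?thesis by (rule power2_le_imp_le) simp
qed

lemma parallelogram_law:
  fixes a b :: "'a::complex_hilbert"
  shows "(norm (a + b))\<^sup>2 + (norm (a - b))\<^sup>2 = 2 * (norm a)\<^sup>2 + 2 * (norm b)\<^sup>2"
  unfolding norm_add_sq norm_diff_sq by simp

lemma norm_cinner_le: "cmod (cinner x y) \<le> norm x * norm y"
proof (cases "y = 0")
  case True then show ?thesis by simp
next
  case False
  define n where "n = (norm y)\<^sup>2"
  have n: "n > 0" using False by (simp add: n_def)
  define t where "t = cinner y x / complex_of_real n"
  have inner_t: "cinner x (t *\<^sub>C y) = complex_of_real ((cmod (cinner x y))\<^sup>2 / n)"
  proof -
    have "cinner x (t *\<^sub>C y) = cinner y x * cinner x y / complex_of_real n"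
      by (simp add: t_def cinner_scaleC_right)
    also have "cinner y x * cinner x y = complex_of_real ((cmod (cinner x y))\<^sup>2)"
      by (simp only: cinner_commute[of y x] cnj_mult_self)
    finally show ?thesis by simp
  qed
  have norm_t: "(norm (t *\<^sub>C y))\<^sup>2 = (cmod (cinner x y))\<^sup>2 / n"
  proof -
    have "(norm (t *\<^sub>C y))\<^sup>2 = (cmod t)\<^sup>2 * n" by (simp add: norm_scaleC power_mult_distrib n_def)
    also have "cmod t = cmod (cinner x y) / n"
      using n by (simp add: t_def norm_divide cinner_commute[of y x])
    finally show ?thesis using n by (simp add: power2_eq_square)
  qed
  have "0 \<le> (norm (x - t *\<^sub>C y))\<^sup>2" by simp
  also have "\<dots> = (norm x)\<^sup>2 - (cmod (cinner x y))\<^sup>2 / n"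
    by (simp only: norm_diff_sq inner_t norm_t Re_complex_of_real)
  finally have "(cmod (cinner x y))\<^sup>2 \<le> (norm x)\<^sup>2 * n" using n by (simp add: pos_divide_le_eq)
  then have "(cmod (cinner x y))\<^sup>2 \<le> (norm x * norm y)\<^sup>2" by (simp add: n_def power_mult_distrib)
  then show ?thesis by (rule power2_le_imp_le) simp
qed

lemma cinner_ext_right: "(\<And>w. cinner w x = cinner w y) \<Longrightarrow> x = y"
proof -
  assume h: "\<And>w. cinner w x = cinner w y"
  have "cinner (x - y) (x - y) = 0" by (simp add: cinner_diff_right h)
  then show "x = y" by simp
qed

lemma cinner_ext_left: "(\<And>u. cinner x u = cinner y u) \<Longrightarrow> x = y"
  by (rule cinner_ext_right) (metis cinner_commute)

lemma bounded_linear_cinner_right: "bounded_linear (cinner w)"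
proof
  show "cinner w (x + y) = cinner w x + cinner w y" for x y by (rule cinner_add_right)
  show "cinner w (r *\<^sub>R x) = r *\<^sub>R cinner w x" for r x
    by (simp add: scaleR_as_scaleC cinner_scaleC_right scaleR_conv_of_real)
  show "\<exists>K. \<forall>x. norm (cinner w x) \<le> norm x * K"
    by (rule exI[of _ "norm w"]) (metis norm_cinner_le mult.commute)
qed

lemma bounded_linear_scaleC: "bounded_linear (\<lambda>x::'a::complex_hilbert. a *\<^sub>C x)"
proof
  show "a *\<^sub>C (x + y) = a *\<^sub>C x + a *\<^sub>C y" for x y :: 'a by (rule scaleC_add_right)
  show "a *\<^sub>C (r *\<^sub>R x) = r *\<^sub>R (a *\<^sub>C x)" for r and x :: 'a
    by (simp add: scaleR_as_scaleC scaleC_scaleC mult.commute)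
  show "\<exists>K. \<forall>x::'a. norm (a *\<^sub>C x) \<le> norm x * K"
    by (rule exI[of _ "cmod a"]) (simp add: norm_scaleC mult.commute)
qed

lemma sums_scaleC: "f sums s \<Longrightarrow> (\<lambda>n. a *\<^sub>C f n) sums (a *\<^sub>C s)"
  by (rule bounded_linear.sums[OF bounded_linear_scaleC])

lemma clinear_on_addD: "clinear_on S f \<Longrightarrow> x \<in> S \<Longrightarrow> y \<in> S \<Longrightarrow> f (x + y) = f x + f y"
  by (simp add: clinear_on_def)

lemma clinear_on_scaleCD: "clinear_on S f \<Longrightarrow> x \<in> S \<Longrightarrow> f (c *\<^sub>C x) = c *\<^sub>C f x"
  by (simp add: clinear_on_def)

lemma bounded_linear_if_clinear:
  assumes "clinear_on UNIV f" "\<And>x. norm (f x) \<le> norm x * K"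
  shows "bounded_linear f"
proof
  show "f (x + y) = f x + f y" for x y using assms(1) by (simp add: clinear_on_addD)
  show "f (r *\<^sub>R x) = r *\<^sub>R f x" for r x using assms(1)
    by (simp add: scaleR_as_scaleC clinear_on_scaleCD)
  show "\<exists>K. \<forall>x. norm (f x) \<le> norm x * K" using assms(2) by blast
qed

section \<open>Orthogonal projection and Riesz representation\<close>

lemma csubspace_0: "csubspace S \<Longrightarrow> 0 \<in> S" by (simp add: csubspace_def)
lemma csubspace_add: "csubspace S \<Longrightarrow> x \<in> S \<Longrightarrow> y \<in> S \<Longrightarrow> x + y \<in> S" by (simp add: csubspace_def)
lemma csubspace_scaleC: "csubspace S \<Longrightarrow> x \<in> S \<Longrightarrow> c *\<^sub>C x \<in> S" by (simp add: csubspace_def)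
lemma csubspace_minus: "csubspace S \<Longrightarrow> x \<in> S \<Longrightarrow> - x \<in> S"
  by (simp add: minus_as_scaleC[of x] csubspace_scaleC)
lemma csubspace_diff: "csubspace S \<Longrightarrow> x \<in> S \<Longrightarrow> y \<in> S \<Longrightarrow> x - y \<in> S"
  using csubspace_add[of S x "- y"] csubspace_minus[of S y] by simp
lemma csubspace_UNIV: "csubspace UNIV" by (simp add: csubspace_def)

lemma clinear_on_zero:
  assumes "clinear_on S f" "csubspace S"
  shows "f 0 = 0"
proof -
  have "f (0 *\<^sub>C 0) = 0 *\<^sub>C f 0" using assms csubspace_0 by (blast intro: clinear_on_scaleCD)
  then show ?thesis by simp
qed

lemma clinear_on_diffD:
  assumes "clinear_on S f" "csubspace S" "x \<in> S" "y \<in> S"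
  shows "f (x - y) = f x - f y"
  using clinear_on_addD[OF assms(1) csubspace_diff[OF assms(2-4)] assms(4)]
  by (simp add: eq_diff_eq)

lemma nearest_point_orthogonal:
  assumes S: "csubspace S" and pS: "p \<in> S"
    and min: "\<And>q. q \<in> S \<Longrightarrow> norm (x - p) \<le> norm (x - q)"
  shows "\<forall>f\<in>S. cinner f (x - p) = 0"
proof
  fix f assume fS: "f \<in> S"
  define c where "c = cinner (x - p) f"
  define k where "k = (norm f)\<^sup>2 + 1"
  have k: "k > 0" using zero_le_power2[of "norm f"] unfolding k_def by linarith
  \<comment> \<open>compare with the competitor p + t f for the optimal step t = cnj c / k\<close>
  define t where "t = complex_of_real (1 / k) * cnj c"
  have "p + t *\<^sub>C f \<in> S" using S pS fS by (simp add: csubspace_add csubspace_scaleC)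
  then have "norm (x - p) \<le> norm (x - (p + t *\<^sub>C f))" by (rule min)
  then have "(norm (x - p))\<^sup>2 \<le> (norm ((x - p) - t *\<^sub>C f))\<^sup>2"
    by (simp add: diff_diff_eq)
  also have "\<dots> = (norm (x - p))\<^sup>2 - 2 * Re (t * c) + (cmod t)\<^sup>2 * (norm f)\<^sup>2"
    by (simp add: norm_diff_scaleC_sq c_def)
  finally have "2 * Re (t * c) \<le> (cmod t)\<^sup>2 * (norm f)\<^sup>2" by simp
  moreover have "t * c = complex_of_real ((cmod c)\<^sup>2 / k)"
    by (simp add: t_def mult.assoc cnj_mult_self)
  moreover have "cmod t = cmod c / k"
    using k by (simp only: t_def norm_mult complex_mod_cnj norm_of_real) simp
  ultimately have "2 * ((cmod c)\<^sup>2 / k) \<le> (cmod c / k)\<^sup>2 * (norm f)\<^sup>2" by simp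
  then have "(cmod c)\<^sup>2 * (2 * k - (norm f)\<^sup>2) \<le> 0"
    using k by (simp add: field_simps power2_eq_square)
  moreover have "2 * k - (norm f)\<^sup>2 > 0" using zero_le_power2[of "norm f"] unfolding k_def
    by (simp add: add_pos_nonneg algebra_simps)
  ultimately have "c = 0" by (simp add: mult_le_0_iff)
  then show "cinner f (x - p) = 0" by (simp add: c_def cinner_eq_zero_sym)
qed

lemma minimizing_sequence_Cauchy:
  assumes S: "csubspace S" and sS: "\<And>n. s n \<in> S"
    and dle: "\<And>q. q \<in> S \<Longrightarrow> d \<le> norm (x - q)" and d0: "0 \<le> d"
    and sd: "\<And>n. (norm (x - s n))\<^sup>2 < d\<^sup>2 + 1 / (real n + 1)"
  shows "Cauchy s"
proof (rule metric_CauchyI)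
  have dist_sq: "(norm (s n - s m))\<^sup>2 \<le> 2 / (real n + 1) + 2 / (real m + 1)" for n m
  proof -
    \<comment> \<open>parallelogram law for x - s m and x - s n, whose mean lies at distance at least d\<close>
    have mid: "(1/2) *\<^sub>C (s n + s m) \<in> S" using S sS by (simp add: csubspace_add csubspace_scaleC)
    have "(x - s m) + (x - s n) = 2 *\<^sub>R (x - (1/2) *\<^sub>C (s n + s m))"
    proof -
      have "2 *\<^sub>R ((1/2) *\<^sub>C (s n + s m)) = s n + s m"
        by (simp add: scaleR_as_scaleC scaleC_scaleC scaleC_one)
      then show ?thesis by (simp add: scaleR_diff_right algebra_simps scaleR_2)
    qed
    then have "norm ((x - s m) + (x - s n)) = 2 * norm (x - (1/2) *\<^sub>C (s n + s m))"
      by simp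
    then have "2 * d \<le> norm ((x - s m) + (x - s n))" using dle[OF mid] by simp
    then have "(2 * d)\<^sup>2 \<le> (norm ((x - s m) + (x - s n)))\<^sup>2"
      using d0 by (intro power_mono) auto
    then show ?thesis
      using parallelogram_law[of "x - s m" "x - s n"] sd[of n] sd[of m] by simp
  qed
  fix e :: real assume e: "e > 0"
  obtain N :: nat where N: "4 / e\<^sup>2 < real N" using reals_Archimedean2 by blast
  have small: "2 / (real n + 1) < e\<^sup>2 / 2" if "N \<le> n" for n
  proof -
    have "4 / e\<^sup>2 < real n + 1" using N that by linarith
    then show ?thesis using e by (simp add: field_simps)
  qed
  show "\<exists>M. \<forall>m\<ge>M. \<forall>n\<ge>M. dist (s m) (s n) < e"
  proof (intro exI allI impI)
    fix m n assume "N \<le> m" "N \<le> n"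
    then have "(norm (s m - s n))\<^sup>2 < e\<^sup>2" using dist_sq[of m n] small[of m] small[of n] by linarith
    then show "dist (s m) (s n) < e" using e by (simp add: dist_norm power_less_imp_less_base)
  qed
qed

lemma exists_minimizing_sequence:
  assumes "csubspace S"
  shows "\<exists>s. (\<forall>n. s n \<in> S) \<and>
    (\<forall>n. (norm (x - s n))\<^sup>2 < (Inf ((\<lambda>s. norm (x - s)) ` S))\<^sup>2 + 1 / (real n + 1))"
proof -
  define d where "d = Inf ((\<lambda>s. norm (x - s)) ` S)"
  have ne: "(\<lambda>s. norm (x - s)) ` S \<noteq> {}" using csubspace_0[OF assms] by blast
  have d0: "d \<ge> 0" unfolding d_def using ne by (auto intro!: cInf_greatest)
  have "\<exists>s\<in>S. (norm (x - s))\<^sup>2 < d\<^sup>2 + 1 / (real n + 1)" for n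
  proof -
    have "d\<^sup>2 < d\<^sup>2 + 1 / (real n + 1)" by (simp add: add_pos_nonneg)
    then have "sqrt (d\<^sup>2) < sqrt (d\<^sup>2 + 1 / (real n + 1))" by (rule real_sqrt_less_mono)
    then have "d < sqrt (d\<^sup>2 + 1 / (real n + 1))" using d0 by simp
    then obtain s where "s \<in> S" "norm (x - s) < sqrt (d\<^sup>2 + 1 / (real n + 1))"
      using cInf_lessD[OF ne] by (auto simp: d_def)
    moreover have "0 \<le> d\<^sup>2 + 1 / (real n + 1)" by simp
    ultimately show ?thesis
      by (metis norm_ge_zero power_strict_mono real_sqrt_pow2 zero_less_numeral pos2)
  qed
  then show ?thesis unfolding d_def by (metis (no_types))
qed

lemma exists_orth_decomposition:
  assumes S: "csubspace S" and cl: "closed S"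
  shows "\<exists>p\<in>S. \<forall>f\<in>S. cinner f (x - p) = 0"
proof -
  define d where "d = Inf ((\<lambda>s. norm (x - s)) ` S)"
  have dle: "d \<le> norm (x - q)" if "q \<in> S" for q
    unfolding d_def using that by (auto intro!: cInf_lower bdd_belowI[of _ 0])
  have d0: "d \<ge> 0" unfolding d_def using csubspace_0[OF S] by (auto intro!: cInf_greatest)
  obtain s where sS: "\<And>n. s n \<in> S" and sd: "\<And>n. (norm (x - s n))\<^sup>2 < d\<^sup>2 + 1 / (real n + 1)"
    using exists_minimizing_sequence[OF S, of x] unfolding d_def by blast
  have "Cauchy s" using minimizing_sequence_Cauchy[OF S sS dle d0 sd] .
  then obtain p where lim: "s \<longlonglongrightarrow> p" using Cauchy_convergent_iff convergent_def by blast
  have pS: "p \<in> S" using cl lim sS closed_sequentially by blast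
  have "(norm (x - p))\<^sup>2 \<le> d\<^sup>2 + 0"
  proof (rule LIMSEQ_le)
    show "(\<lambda>n. (norm (x - s n))\<^sup>2) \<longlonglongrightarrow> (norm (x - p))\<^sup>2" by (intro tendsto_intros lim)
    show "(\<lambda>n. d\<^sup>2 + 1 / (real n + 1)) \<longlonglongrightarrow> d\<^sup>2 + 0"
      using LIMSEQ_inverse_real_of_nat
      by (intro tendsto_add tendsto_const) (simp add: inverse_eq_divide add.commute)
    show "\<exists>N. \<forall>n\<ge>N. (norm (x - s n))\<^sup>2 \<le> d\<^sup>2 + 1 / (real n + 1)"
      using sd by (auto intro: less_imp_le)
  qed
  then have "(norm (x - p))\<^sup>2 \<le> d\<^sup>2" by simp
  then have "norm (x - p) \<le> d" using d0 by (rule power2_le_imp_le)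
  then have "norm (x - p) \<le> norm (x - q)" if "q \<in> S" for q using dle[OF that] by linarith
  then show ?thesis using nearest_point_orthogonal[OF S pS] pS by blast
qed

locale closed_csubspace =
  fixes S :: "'a::complex_hilbert set"
  assumes sub: "csubspace S" and cl: "closed S"
begin

lemma orth_proj_unique:
  assumes "p \<in> S" "\<forall>f\<in>S. cinner f (x - p) = 0" "q \<in> S" "\<forall>f\<in>S. cinner f (x - q) = 0"
  shows "p = q"
proof -
  have "q - p \<in> S" using assms sub by (simp add: csubspace_diff)
  moreover have "q - p = (x - p) - (x - q)" by simp
  then have "cinner f (q - p) = 0" if "f \<in> S" for f using assms that
    by (simp add: cinner_diff_right)
  ultimately have "cinner (q - p) (q - p) = 0" by blast
  then show ?thesis by simp
qed

lemma orth_proj_char: "orth_proj S x \<in> S \<and> (\<forall>f\<in>S. cinner f (x - orth_proj S x) = 0)"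
proof -
  have "\<exists>!p. p \<in> S \<and> (\<forall>f\<in>S. cinner f (x - p) = 0)"
    using exists_orth_decomposition[OF sub cl] orth_proj_unique by blast
  then show ?thesis unfolding orth_proj_def by (rule theI')
qed

lemma orth_proj_in: "orth_proj S x \<in> S"
  using orth_proj_char by blast

lemma orth_proj_orth: "f \<in> S \<Longrightarrow> cinner f (x - orth_proj S x) = 0"
  using orth_proj_char by blast

lemma orth_proj_orth': "f \<in> S \<Longrightarrow> cinner (x - orth_proj S x) f = 0"
  using orth_proj_orth cinner_eq_zero_sym by blast

lemma orth_proj_eqI: "p \<in> S \<Longrightarrow> (\<And>f. f \<in> S \<Longrightarrow> cinner f (x - p) = 0) \<Longrightarrow> orth_proj S x = p"
  using orth_proj_unique orth_proj_char by blast

lemma orth_proj_id: "x \<in> S \<Longrightarrow> orth_proj S x = x"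
  by (rule orth_proj_eqI) auto

lemma orth_proj_idem: "orth_proj S (orth_proj S x) = orth_proj S x"
  by (rule orth_proj_id[OF orth_proj_in])

lemma orth_proj_add: "orth_proj S (x + y) = orth_proj S x + orth_proj S y"
proof (rule orth_proj_eqI)
  show "orth_proj S x + orth_proj S y \<in> S" using sub orth_proj_in by (simp add: csubspace_add)
  fix f assume "f \<in> S"
  have "x + y - (orth_proj S x + orth_proj S y) = (x - orth_proj S x) + (y - orth_proj S y)"
    by simp
  then show "cinner f (x + y - (orth_proj S x + orth_proj S y)) = 0"
    using \<open>f \<in> S\<close> by (simp only: cinner_add_right orth_proj_orth) simp
qed

lemma orth_proj_scaleC: "orth_proj S (c *\<^sub>C x) = c *\<^sub>C orth_proj S x"
proof (rule orth_proj_eqI)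
  show "c *\<^sub>C orth_proj S x \<in> S" using sub orth_proj_in by (simp add: csubspace_scaleC)
  fix f assume "f \<in> S"
  moreover have "c *\<^sub>C x - c *\<^sub>C orth_proj S x = c *\<^sub>C (x - orth_proj S x)"
    by (simp add: scaleC_diff_right)
  ultimately show "cinner f (c *\<^sub>C x - c *\<^sub>C orth_proj S x) = 0"
    by (simp add: cinner_scaleC_right orth_proj_orth)
qed

lemma orth_proj_minus: "orth_proj S (- x) = - orth_proj S x"
  by (simp add: minus_as_scaleC orth_proj_scaleC)

lemma orth_proj_diff: "orth_proj S (x - y) = orth_proj S x - orth_proj S y"
  unfolding diff_conv_add_uminus by (simp only: orth_proj_add orth_proj_minus)

lemma orth_proj_pythagoras: "(norm x)\<^sup>2 = (norm (orth_proj S x))\<^sup>2 + (norm (x - orth_proj S x))\<^sup>2"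
proof -
  have "(norm x)\<^sup>2 = (norm (orth_proj S x + (x - orth_proj S x)))\<^sup>2" by simp
  also have "\<dots> = (norm (orth_proj S x))\<^sup>2 + (norm (x - orth_proj S x))\<^sup>2"
    by (simp only: norm_add_sq orth_proj_orth[OF orth_proj_in]) simp
  finally show ?thesis .
qed

lemma norm_orth_proj_le: "norm (orth_proj S x) \<le> norm x"
  using orth_proj_pythagoras[of x]
  by (metis le_add_same_cancel1 norm_ge_zero power2_le_imp_le zero_le_power2)

lemma cinner_orth_proj: "f \<in> S \<Longrightarrow> cinner f (orth_proj S x) = cinner f x"
  using orth_proj_orth[of f x] by (simp add: cinner_diff_right)

lemma orth_proj_eq_0_if_orth: "(\<And>f. f \<in> S \<Longrightarrow> cinner x f = 0) \<Longrightarrow> orth_proj S x = 0"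
  by (rule orth_proj_eqI) (auto simp: sub csubspace_0 cinner_eq_zero_sym)

lemma closed_csubspace_kernel:
  assumes add: "\<And>x y. x \<in> S \<Longrightarrow> y \<in> S \<Longrightarrow> \<psi> (x + y) = \<psi> x + \<psi> y"
    and scal: "\<And>c x. x \<in> S \<Longrightarrow> \<psi> (c *\<^sub>C x) = c * \<psi> x"
    and bnd: "\<And>x. x \<in> S \<Longrightarrow> cmod (\<psi> x) \<le> K * norm x"
  shows "closed_csubspace {x\<in>S. \<psi> x = 0}"
proof
  show "csubspace {x\<in>S. \<psi> x = 0}" unfolding csubspace_def
    using scal[of 0 0] sub add scal by (auto simp: csubspace_0 csubspace_add csubspace_scaleC)
  show "closed {x\<in>S. \<psi> x = 0}"
    unfolding closed_sequential_limits
  proof (intro allI impI, elim conjE)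
    fix xs l assume xs: "\<forall>n. xs n \<in> {x\<in>S. \<psi> x = 0}" and lim: "xs \<longlonglongrightarrow> l"
    have lS: "l \<in> S" using cl xs lim closed_sequentially by blast
    have "cmod (\<psi> l) \<le> K * norm (l - xs n)" for n
    proof -
      have "\<psi> l = \<psi> (l - xs n)" using add[of "l - xs n" "xs n"] sub lS xs
        by (simp add: csubspace_diff)
      then show ?thesis using bnd[of "l - xs n"] sub lS xs by (simp add: csubspace_diff)
    qed
    moreover have "(\<lambda>n. K * norm (l - xs n)) \<longlonglongrightarrow> K * 0"
    proof -
      have "(\<lambda>n. l - xs n) \<longlonglongrightarrow> 0" using tendsto_diff[OF tendsto_const[of l] lim] by simp
      then show ?thesis by (intro tendsto_mult tendsto_const tendsto_norm_zero)
    qed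
    ultimately have "cmod (\<psi> l) \<le> 0"
      by (intro tendsto_le[OF _ _ tendsto_const]) auto
    then show "l \<in> {x\<in>S. \<psi> x = 0}" using lS by simp
  qed
qed

end

lemma closed_csubspace_UNIV: "closed_csubspace UNIV"
  by standard (simp_all add: csubspace_UNIV)

lemma (in closed_csubspace) riesz_representation:
  fixes \<psi> :: "'a \<Rightarrow> complex"
  assumes add: "\<And>x y. x \<in> S \<Longrightarrow> y \<in> S \<Longrightarrow> \<psi> (x + y) = \<psi> x + \<psi> y"
    and scal: "\<And>c x. x \<in> S \<Longrightarrow> \<psi> (c *\<^sub>C x) = c * \<psi> x"
    and bnd: "\<And>x. x \<in> S \<Longrightarrow> cmod (\<psi> x) \<le> K * norm x"
  shows "\<exists>f\<in>S. \<forall>x\<in>S. \<psi> x = cinner f x"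
proof (cases "\<forall>x\<in>S. \<psi> x = 0")
  case True then show ?thesis using sub csubspace_0 by (metis cinner_zero_left)
next
  case False
  then obtain z where zS: "z \<in> S" and z: "\<psi> z \<noteq> 0" by blast
  define Ker where "Ker = {x\<in>S. \<psi> x = 0}"
  have diffS: "\<psi> (x - y) = \<psi> x - \<psi> y" if "x \<in> S" "y \<in> S" for x y
    using add[of "x - y" y] that sub by (simp add: csubspace_diff eq_diff_eq)
  interpret K: closed_csubspace Ker
    unfolding Ker_def by (rule closed_csubspace_kernel[OF add scal bnd])
  \<comment> \<open>w spans the orthogonal complement of the kernel within S\<close>
  define w where "w = z - orth_proj Ker z"
  have wS: "w \<in> S" using zS K.orth_proj_in sub by (simp add: w_def Ker_def csubspace_diff)
  have pw: "\<psi> w = \<psi> z" using diffS[OF zS, of "orth_proj Ker z"] K.orth_proj_in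
    by (simp add: w_def Ker_def)
  have worth: "cinner w k = 0" if "k \<in> Ker" for k
    using K.orth_proj_orth'[OF that] by (simp add: w_def)
  have w0: "w \<noteq> 0" using z pw scal[of 0 0] sub csubspace_0 by fastforce
  show ?thesis
  proof (intro bexI ballI)
    show "(cnj (\<psi> w) / complex_of_real ((norm w)\<^sup>2)) *\<^sub>C w \<in> S"
      using wS sub by (simp add: csubspace_scaleC)
    fix x assume xS: "x \<in> S"
    have "x - (\<psi> x / \<psi> w) *\<^sub>C w \<in> Ker"
      using diffS[OF xS, of "(\<psi> x / \<psi> w) *\<^sub>C w"] xS wS sub scal pw z
      by (simp add: Ker_def csubspace_diff csubspace_scaleC)
    then have "cinner w (x - (\<psi> x / \<psi> w) *\<^sub>C w) = 0" by (rule worth)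
    then have "cinner w x = (\<psi> x / \<psi> w) * complex_of_real ((norm w)\<^sup>2)"
      by (simp add: cinner_diff_right cinner_scaleC_right cinner_self_norm)
    then show "\<psi> x = cinner ((cnj (\<psi> w) / complex_of_real ((norm w)\<^sup>2)) *\<^sub>C w) x"
      using w0 pw z by (simp add: cinner_scaleC_left field_simps)
  qed
qed

lemma powser_sums_zero_imp_coeff_0:
  fixes c :: "nat \<Rightarrow> complex"
  assumes "\<forall>z. z \<noteq> 0 \<and> norm z < 1 \<longrightarrow> (\<lambda>n. c n * z ^ n) sums 0"
  shows "c 0 = 0"
proof -
  have "((\<lambda>_. 0::complex) \<longlongrightarrow> c 0) (at (0::complex))"
    using powser_limit_0_strong[where s=1 and a=c and f="\<lambda>_. 0"] assms by auto
  from LIM_const_eq[OF this] show ?thesis by simp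
qed

lemma powser_sums_zero_imp_coeff_zero:
  fixes c :: "nat \<Rightarrow> complex"
  shows "(\<forall>z. z \<noteq> 0 \<and> norm z < 1 \<longrightarrow> (\<lambda>n. c n * z ^ n) sums 0) \<Longrightarrow> c m = 0"
proof (induction m arbitrary: c)
  case 0 then show ?case by (rule powser_sums_zero_imp_coeff_0)
next
  case (Suc m)
  have c0: "c 0 = 0" using Suc.prems by (rule powser_sums_zero_imp_coeff_0)
  have "(\<lambda>n. c (Suc n) * z ^ n) sums 0" if z: "z \<noteq> 0" "norm z < 1" for z :: complex
  proof -
    have "(\<lambda>n. c (Suc n) * z ^ (Suc n)) sums 0"
      using Suc.prems z c0 by (subst sums_Suc_iff) simp
    from sums_mult[OF this, of "1 / z"] show ?thesis using z by (simp add: field_simps)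
  qed
  then show ?case using Suc.IH[of "\<lambda>n. c (Suc n)"] by simp
qed

lemma powser_coeffs_unique:
  fixes a b :: "nat \<Rightarrow> 'y::complex_hilbert"
  assumes a: "\<forall>z\<in>ball 0 1. (\<lambda>n. z ^ n *\<^sub>C a n) sums f z"
    and b: "\<forall>z\<in>ball 0 1. (\<lambda>n. z ^ n *\<^sub>C b n) sums f z"
  shows "a = b"
proof
  fix m
  have "cinner w (a m) = cinner w (b m)" for w
  proof -
    have "(\<lambda>n. (cinner w (a n) - cinner w (b n)) * z ^ n) sums 0" if z: "z \<noteq> 0 \<and> norm z < 1" for z
    proof -
      have zb: "z \<in> ball 0 1" using z by simp
      have "(\<lambda>n. cinner w (z ^ n *\<^sub>C a n) - cinner w (z ^ n *\<^sub>C b n)) sums (cinner w (f z) - cinner w (f z))"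
        using sums_diff[OF bounded_linear.sums[OF bounded_linear_cinner_right a[rule_format, OF zb]]
            bounded_linear.sums[OF bounded_linear_cinner_right b[rule_format, OF zb]]] .
      then show ?thesis by (simp add: cinner_scaleC_right algebra_simps)
    qed
    then have "cinner w (a m) - cinner w (b m) = 0"
      using powser_sums_zero_imp_coeff_zero[of "\<lambda>n. cinner w (a n) - cinner w (b n)" m] by blast
    then show ?thesis by simp
  qed
  then show "a m = b m" using cinner_ext_right by blast
qed

definition l2_seq :: "(nat \<Rightarrow> 'y::complex_hilbert) \<Rightarrow> bool" where
  "l2_seq a \<longleftrightarrow> summable (\<lambda>n. (norm (a n))\<^sup>2)"

definition l2_norm2 :: "(nat \<Rightarrow> 'y::complex_hilbert) \<Rightarrow> real" where
  "l2_norm2 a = (\<Sum>n. (norm (a n))\<^sup>2)"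

definition l2_inner :: "(nat \<Rightarrow> 'y::complex_hilbert) \<Rightarrow> (nat \<Rightarrow> 'y) \<Rightarrow> complex" where
  "l2_inner a b = (\<Sum>n. cinner (a n) (b n))"

lemma l2_norm2_nonneg: "l2_seq a \<Longrightarrow> l2_norm2 a \<ge> 0"
  unfolding l2_norm2_def l2_seq_def by (rule suminf_nonneg) auto

lemma norm_sq_le_l2_norm2: "l2_seq a \<Longrightarrow> (norm (a n))\<^sup>2 \<le> l2_norm2 a"
  unfolding l2_norm2_def l2_seq_def
  using sum_le_suminf[of "\<lambda>n. (norm (a n))\<^sup>2" "{n}"] by simp

lemma partial_sum_le_l2_norm2: "l2_seq a \<Longrightarrow> (\<Sum>n<N. (norm (a n))\<^sup>2) \<le> l2_norm2 a"
  unfolding l2_norm2_def l2_seq_def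
  using sum_le_suminf[of "\<lambda>n. (norm (a n))\<^sup>2" "{..<N}"] by simp

lemma l2_seq_powser_summable:
  assumes "l2_seq a" and z: "norm z < 1"
  shows "summable (\<lambda>n. norm (z ^ n *\<^sub>C a n))"
proof (rule summable_comparison_test)
  show "summable (\<lambda>n. sqrt (l2_norm2 a) * norm z ^ n)"
    using z by (intro summable_mult summable_geometric) simp
  have "norm (norm (z ^ n *\<^sub>C a n)) \<le> sqrt (l2_norm2 a) * norm z ^ n" for n
    using mult_right_mono[OF real_le_rsqrt[OF norm_sq_le_l2_norm2[OF assms(1)]], of "norm z ^ n"]
    by (simp add: norm_scaleC norm_power mult.commute)
  then show "\<exists>N. \<forall>n\<ge>N. norm (norm (z ^ n *\<^sub>C a n)) \<le> sqrt (l2_norm2 a) * norm z ^ n"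
    by blast
qed

lemma l2_seq_add:
  assumes "l2_seq a" "l2_seq b"
  shows "l2_seq (\<lambda>n. a n + b n)"
  unfolding l2_seq_def
proof (rule summable_comparison_test)
  show "summable (\<lambda>n. 2 * (norm (a n))\<^sup>2 + 2 * (norm (b n))\<^sup>2)"
    using assms unfolding l2_seq_def by (intro summable_add summable_mult)
  show "\<exists>N. \<forall>n\<ge>N. norm ((norm (a n + b n))\<^sup>2) \<le> 2 * (norm (a n))\<^sup>2 + 2 * (norm (b n))\<^sup>2"
  proof (intro exI allI impI)
    fix n
    have "(norm (a n + b n))\<^sup>2 \<le> (norm (a n) + norm (b n))\<^sup>2"
      using norm_triangle_ineq[of "a n" "b n"] by (simp add: power_mono)
    also have "\<dots> \<le> 2 * (norm (a n))\<^sup>2 + 2 * (norm (b n))\<^sup>2"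
      unfolding power2_sum using sum_squares_bound[of "norm (a n)" "norm (b n)"] by linarith
    finally show "norm ((norm (a n + b n))\<^sup>2) \<le> 2 * (norm (a n))\<^sup>2 + 2 * (norm (b n))\<^sup>2"
      by simp
  qed
qed

lemma l2_seq_scaleC:
  assumes "l2_seq a"
  shows "l2_seq (\<lambda>n. c *\<^sub>C a n)"
  using summable_mult[OF assms[unfolded l2_seq_def], of "(cmod c)\<^sup>2"]
  by (simp add: l2_seq_def norm_scaleC power_mult_distrib)

lemma l2_seq_minus: "l2_seq a \<Longrightarrow> l2_seq (\<lambda>n. - a n)"
  by (simp add: l2_seq_def)

lemma l2_seq_diff:
  assumes "l2_seq a" "l2_seq b"
  shows "l2_seq (\<lambda>n. a n - b n)"
  using l2_seq_add[OF assms(1) l2_seq_minus[OF assms(2)]] by simp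

lemma l2_seq_Suc: "l2_seq a \<Longrightarrow> l2_seq (\<lambda>n. a (Suc n))"
  unfolding l2_seq_def by (subst summable_Suc_iff)

lemma summable_norm_mult_l2:
  assumes "l2_seq a" "l2_seq b"
  shows "summable (\<lambda>n. norm (a n) * norm (b n))"
proof (rule summable_comparison_test)
  show "summable (\<lambda>n. (norm (a n))\<^sup>2 + (norm (b n))\<^sup>2)"
    using assms unfolding l2_seq_def by (rule summable_add)
  show "\<exists>N. \<forall>n\<ge>N. norm (norm (a n) * norm (b n)) \<le> (norm (a n))\<^sup>2 + (norm (b n))\<^sup>2"
  proof (intro exI allI impI)
    fix n
    have "2 * norm (a n) * norm (b n) \<le> (norm (a n))\<^sup>2 + (norm (b n))\<^sup>2"
      using sum_squares_bound[of "norm (a n)" "norm (b n)"] by simp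
    moreover have "0 \<le> norm (a n) * norm (b n)" by simp
    ultimately have "norm (a n) * norm (b n) \<le> (norm (a n))\<^sup>2 + (norm (b n))\<^sup>2" by linarith
    then show "norm (norm (a n) * norm (b n)) \<le> (norm (a n))\<^sup>2 + (norm (b n))\<^sup>2" by simp
  qed
qed

lemma summable_cinner_l2:
  assumes "l2_seq a" "l2_seq b"
  shows "summable (\<lambda>n. cinner (a n) (b n))"
proof (rule summable_norm_cancel, rule summable_comparison_test[OF _ summable_norm_mult_l2[OF assms]])
  show "\<exists>N. \<forall>n\<ge>N. norm (norm (cinner (a n) (b n))) \<le> norm (a n) * norm (b n)"
    by (intro exI allI impI) (simp add: norm_cinner_le)
qed

lemma l2_Cauchy_Schwarz_norms:
  assumes "l2_seq a" "l2_seq b"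
  shows "(\<Sum>n. norm (a n) * norm (b n)) \<le> sqrt (l2_norm2 a) * sqrt (l2_norm2 b)"
proof (rule suminf_le_const[OF summable_norm_mult_l2[OF assms]])
  fix N
  have "(\<Sum>n<N. norm (a n) * norm (b n)) = (\<Sum>n<N. \<bar>norm (a n)\<bar> * \<bar>norm (b n)\<bar>)" by simp
  also have "\<dots> \<le> L2_set (\<lambda>n. norm (a n)) {..<N} * L2_set (\<lambda>n. norm (b n)) {..<N}"
    by (rule L2_set_mult_ineq)
  also have "\<dots> \<le> sqrt (l2_norm2 a) * sqrt (l2_norm2 b)"
    unfolding L2_set_def
    using partial_sum_le_l2_norm2[OF assms(1), of N] partial_sum_le_l2_norm2[OF assms(2), of N]
      l2_norm2_nonneg[OF assms(1)]
    by (intro mult_mono) (auto intro: sum_nonneg)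
  finally show "(\<Sum>n<N. norm (a n) * norm (b n)) \<le> sqrt (l2_norm2 a) * sqrt (l2_norm2 b)" .
qed

lemma l2_Cauchy_Schwarz:
  assumes "l2_seq a" "l2_seq b"
  shows "cmod (l2_inner a b) \<le> sqrt (l2_norm2 a) * sqrt (l2_norm2 b)"
proof -
  have s1: "summable (\<lambda>n. norm (cinner (a n) (b n)))"
    by (rule summable_comparison_test[OF _ summable_norm_mult_l2[OF assms]])
      (intro exI allI impI, simp add: norm_cinner_le)
  have "cmod (l2_inner a b) \<le> (\<Sum>n. norm (cinner (a n) (b n)))"
    unfolding l2_inner_def by (rule summable_norm[OF s1])
  also have "\<dots> \<le> (\<Sum>n. norm (a n) * norm (b n))"
    by (rule suminf_le[OF _ s1 summable_norm_mult_l2[OF assms]]) (simp add: norm_cinner_le)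
  also have "\<dots> \<le> sqrt (l2_norm2 a) * sqrt (l2_norm2 b)" by (rule l2_Cauchy_Schwarz_norms[OF assms])
  finally show ?thesis .
qed

lemma l2_inner_self: "l2_seq a \<Longrightarrow> l2_inner a a = complex_of_real (l2_norm2 a)"
proof -
  assume a: "l2_seq a"
  have "(\<lambda>n. complex_of_real ((norm (a n))\<^sup>2)) sums complex_of_real (l2_norm2 a)"
    using a unfolding l2_seq_def l2_norm2_def by (intro sums_of_real summable_sums)
  then have "(\<lambda>n. cinner (a n) (a n)) sums complex_of_real (l2_norm2 a)"
    by (simp only: cinner_self_norm)
  then show ?thesis unfolding l2_inner_def by (rule sums_unique[symmetric])
qed

lemma l2_inner_commute: "l2_seq a \<Longrightarrow> l2_seq b \<Longrightarrow> l2_inner b a = cnj (l2_inner a b)"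
proof -
  assume a: "l2_seq a" and b: "l2_seq b"
  have "(\<lambda>n. cinner (a n) (b n)) sums l2_inner a b" unfolding l2_inner_def
    by (rule summable_sums[OF summable_cinner_l2[OF a b]])
  then have "(\<lambda>n. cnj (cinner (a n) (b n))) sums cnj (l2_inner a b)" by (simp add: sums_cnj)
  then have "(\<lambda>n. cinner (b n) (a n)) sums cnj (l2_inner a b)"
    by (simp add: cinner_commute[of "a _"])
  then show ?thesis unfolding l2_inner_def by (rule sums_unique[symmetric])
qed

lemma l2_norm2_diff:
  assumes a: "l2_seq a" and b: "l2_seq b"
  shows "l2_norm2 (\<lambda>n. a n - b n) = l2_norm2 a - 2 * Re (l2_inner a b) + l2_norm2 b"
proof -
  have "(\<lambda>n. (norm (a n))\<^sup>2 - 2 * Re (cinner (a n) (b n)) + (norm (b n))\<^sup>2)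
      sums (l2_norm2 a - 2 * Re (l2_inner a b) + l2_norm2 b)"
  proof (intro sums_add sums_diff sums_mult)
    show "(\<lambda>n. (norm (a n))\<^sup>2) sums l2_norm2 a" using a unfolding l2_seq_def l2_norm2_def
      by (rule summable_sums)
    show "(\<lambda>n. (norm (b n))\<^sup>2) sums l2_norm2 b" using b unfolding l2_seq_def l2_norm2_def
      by (rule summable_sums)
    have "(\<lambda>n. cinner (a n) (b n)) sums l2_inner a b" unfolding l2_inner_def
      by (rule summable_sums[OF summable_cinner_l2[OF a b]])
    then show "(\<lambda>n. Re (cinner (a n) (b n))) sums Re (l2_inner a b)" by (rule sums_Re)
  qed
  then have s: "(\<lambda>n. (norm (a n - b n))\<^sup>2) sums (l2_norm2 a - 2 * Re (l2_inner a b) + l2_norm2 b)"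
    by (simp add: norm_diff_sq)
  show ?thesis using sums_unique[OF s] by (simp add: l2_norm2_def)
qed

lemma l2_norm2_eq_0_iff: "l2_seq a \<Longrightarrow> l2_norm2 a = 0 \<longleftrightarrow> (\<forall>n. a n = 0)"
proof -
  assume a: "l2_seq a"
  have "l2_norm2 a = 0 \<longleftrightarrow> (\<forall>n. (norm (a n))\<^sup>2 = 0)"
    unfolding l2_norm2_def using a unfolding l2_seq_def by (intro suminf_eq_zero_iff) auto
  then show ?thesis by simp
qed

lemma l2_norm2_scaleC:
  assumes "l2_seq a"
  shows "l2_norm2 (\<lambda>n. k *\<^sub>C a n) = (cmod k)\<^sup>2 * l2_norm2 a"
proof -
  have "(\<lambda>n. (cmod k)\<^sup>2 * (norm (a n))\<^sup>2) sums ((cmod k)\<^sup>2 * l2_norm2 a)"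
    using assms unfolding l2_seq_def l2_norm2_def by (intro sums_mult summable_sums)
  then have "(\<lambda>n. (norm (k *\<^sub>C a n))\<^sup>2) sums ((cmod k)\<^sup>2 * l2_norm2 a)"
    by (simp add: norm_scaleC power_mult_distrib)
  then show ?thesis unfolding l2_norm2_def by (rule sums_unique[symmetric])
qed

lemma l2_inner_zero_left: "l2_inner (\<lambda>n. 0) b = 0" by (simp add: l2_inner_def)

lemma l2_inner_add_right:
  "l2_seq a \<Longrightarrow> l2_seq b \<Longrightarrow> l2_seq c \<Longrightarrow>
    l2_inner a (\<lambda>n. b n + c n) = l2_inner a b + l2_inner a c"
  unfolding l2_inner_def
  by (simp add: cinner_add_right suminf_add[OF summable_cinner_l2 summable_cinner_l2])

lemma l2_inner_scaleC_right:
  "l2_seq a \<Longrightarrow> l2_seq b \<Longrightarrow> l2_inner a (\<lambda>n. k *\<^sub>C b n) = k * l2_inner a b"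
  unfolding l2_inner_def by (simp add: cinner_scaleC_right suminf_mult[OF summable_cinner_l2])

lemma l2_norm2_split_head:
  "l2_seq a \<Longrightarrow> l2_norm2 a = (norm (a 0))\<^sup>2 + l2_norm2 (\<lambda>n. a (Suc n))"
  unfolding l2_seq_def l2_norm2_def using suminf_split_head[of "\<lambda>n. (norm (a n))\<^sup>2"] by simp

lemma l2_inner_split_head:
  assumes "l2_seq a" "l2_seq b"
  shows "l2_inner a b = cinner (a 0) (b 0) + l2_inner (\<lambda>n. a (Suc n)) (\<lambda>n. b (Suc n))"
  unfolding l2_inner_def using suminf_split_head[OF summable_cinner_l2[OF assms]] by simp

definition h2_of_coeffs :: "(nat \<Rightarrow> 'y::complex_hilbert) \<Rightarrow> complex \<Rightarrow> 'y" where
  "h2_of_coeffs a z = (\<Sum>n. z ^ n *\<^sub>C a n)"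

lemma h2_of_coeffs_sums:
  assumes "l2_seq a" "z \<in> ball 0 1"
  shows "(\<lambda>n. z ^ n *\<^sub>C a n) sums h2_of_coeffs a z"
  unfolding h2_of_coeffs_def using assms
  by (auto intro!: summable_sums summable_norm_cancel[OF l2_seq_powser_summable])

lemma h2_coeffs_h2_of_coeffs: "l2_seq a \<Longrightarrow> h2_coeffs (h2_of_coeffs a) a"
  using h2_of_coeffs_sums by (auto simp: h2_coeffs_def l2_seq_def)

lemma h2_coeffs_cong: "(\<And>z. z \<in> ball 0 1 \<Longrightarrow> f z = g z) \<Longrightarrow> h2_coeffs f = h2_coeffs g"
  unfolding h2_coeffs_def by (intro ext) auto

lemma h2_coeffs_unique: "h2_coeffs f a \<Longrightarrow> h2_coeffs f b \<Longrightarrow> a = b"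
  unfolding h2_coeffs_def using powser_coeffs_unique by blast

lemma h2_coeff_eq: "h2_coeffs f a \<Longrightarrow> h2_coeff f = a"
  unfolding h2_coeff_def using h2_coeffs_unique by blast

lemma h2_coeffs_l2_seq: "h2_coeffs f a \<Longrightarrow> l2_seq a"
  by (simp add: h2_coeffs_def l2_seq_def)

lemma h2_coeffs_h2_coeff: "in_H2 f \<Longrightarrow> h2_coeffs f (h2_coeff f)"
  unfolding in_H2_def using h2_coeff_eq by metis

lemma h2_norm_eq: "h2_coeffs f a \<Longrightarrow> h2_norm f = sqrt (l2_norm2 a)"
  by (simp add: h2_norm_def h2_coeff_eq l2_norm2_def)

lemma h2_inner_eq: "h2_coeffs f a \<Longrightarrow> h2_coeffs g b \<Longrightarrow> h2_inner f g = l2_inner a b"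
  by (simp add: h2_inner_def h2_coeff_eq l2_inner_def)

lemma h2_coeffs_eq_on_disc:
  assumes "h2_coeffs f a" "h2_coeffs g a" "z \<in> ball 0 1"
  shows "f z = g z"
  using assms unfolding h2_coeffs_def using sums_unique2 by blast

section \<open>Transfer functions of contractive colligations\<close>

definition transfer_coeff :: "('u \<Rightarrow> 'y) \<Rightarrow> ('u \<Rightarrow> 'u) \<Rightarrow> nat \<Rightarrow> 'u \<Rightarrow> 'y" where
  "transfer_coeff a1 a2 n u = a1 ((a2 ^^ n) u)"

text \<open>For a contractive colligation, transfer_fun a1 a2 z = a1 (I - z a2)\<inverse>, expanded in powers of z.\<close>
definition transfer_fun ::
    "('u::complex_hilbert \<Rightarrow> 'y::complex_hilbert) \<Rightarrow> ('u \<Rightarrow> 'u) \<Rightarrow> complex \<Rightarrow> 'u \<Rightarrow> 'y" where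
  "transfer_fun a1 a2 z u = h2_of_coeffs (\<lambda>n. transfer_coeff a1 a2 n u) z"

locale contractive_colligation =
  fixes a1 :: "'u::complex_hilbert \<Rightarrow> 'y::complex_hilbert" and a2 :: "'u \<Rightarrow> 'u"
  assumes lin1: "clinear_on UNIV a1" and lin2: "clinear_on UNIV a2"
    and contr: "\<And>u. (norm (a1 u))\<^sup>2 + (norm (a2 u))\<^sup>2 \<le> (norm u)\<^sup>2"
begin

abbreviation "c \<equiv> transfer_coeff a1 a2"
abbreviation "H \<equiv> transfer_fun a1 a2"

lemma a1_add: "a1 (x + y) = a1 x + a1 y" using lin1 by (simp add: clinear_on_addD)
lemma a1_scaleC: "a1 (k *\<^sub>C x) = k *\<^sub>C a1 x" using lin1 by (simp add: clinear_on_scaleCD)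
lemma a2_add: "a2 (x + y) = a2 x + a2 y" using lin2 by (simp add: clinear_on_addD)
lemma a2_scaleC: "a2 (k *\<^sub>C x) = k *\<^sub>C a2 x" using lin2 by (simp add: clinear_on_scaleCD)

lemma a2_pow_add: "(a2 ^^ n) (x + y) = (a2 ^^ n) x + (a2 ^^ n) y"
  by (induction n) (simp_all add: a2_add)
lemma a2_pow_scaleC: "(a2 ^^ n) (k *\<^sub>C x) = k *\<^sub>C (a2 ^^ n) x"
  by (induction n) (simp_all add: a2_scaleC)

lemma coeff_add: "c n (x + y) = c n x + c n y" by (simp add: transfer_coeff_def a2_pow_add a1_add)
lemma coeff_scaleC: "c n (k *\<^sub>C x) = k *\<^sub>C c n x"
  by (simp add: transfer_coeff_def a2_pow_scaleC a1_scaleC)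

lemma coeff_0: "c 0 x = a1 x" by (simp add: transfer_coeff_def)
lemma coeff_Suc: "c (Suc n) x = c n (a2 x)"
  unfolding transfer_coeff_def funpow_Suc_right comp_def ..

lemma norm_a1_le: "norm (a1 u) \<le> norm u"
  using contr[of u] by (rule norm_le_if_sq_add_le) simp

lemma norm_a2_le: "norm (a2 u) \<le> norm u"
  using contr[of u] by (intro norm_le_if_sq_add_le[of _ "(norm (a1 u))\<^sup>2"]) (simp_all add: add.commute)

lemma norm_a2_pow_le: "norm ((a2 ^^ n) u) \<le> norm u"
  by (induction n) (auto intro: order_trans[OF norm_a2_le])

lemma norm_coeff_le: "norm (c n u) \<le> norm u"
  unfolding transfer_coeff_def using norm_a1_le norm_a2_pow_le order_trans by blast

lemma coeff_partial_sums_le: "(\<Sum>n<N. (norm (c n u))\<^sup>2) + (norm ((a2 ^^ N) u))\<^sup>2 \<le> (norm u)\<^sup>2"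
proof (induction N)
  case 0 then show ?case by simp
next
  case (Suc N)
  have "(norm (c N u))\<^sup>2 + (norm ((a2 ^^ Suc N) u))\<^sup>2 \<le> (norm ((a2 ^^ N) u))\<^sup>2"
    using contr[of "(a2 ^^ N) u"] by (simp add: transfer_coeff_def)
  then show ?case using Suc.IH by simp
qed

lemma coeff_l2_seq: "l2_seq (\<lambda>n. c n u)"
  unfolding l2_seq_def
proof (rule bounded_imp_summable[where B="(norm u)\<^sup>2"])
  show "(\<Sum>k\<le>n. (norm (c k u))\<^sup>2) \<le> (norm u)\<^sup>2" for n
    using coeff_partial_sums_le[where N="Suc n" and u=u] zero_le_power2[of "norm ((a2 ^^ Suc n) u)"]
    unfolding lessThan_Suc_atMost by linarith
qed simp

lemma coeff_l2_norm2_le: "l2_norm2 (\<lambda>n. c n u) \<le> (norm u)\<^sup>2"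
  unfolding l2_norm2_def
proof (rule suminf_le_const)
  show "summable (\<lambda>n. (norm (c n u))\<^sup>2)" using coeff_l2_seq by (simp add: l2_seq_def)
  show "(\<Sum>n<N. (norm (c n u))\<^sup>2) \<le> (norm u)\<^sup>2" for N
    using coeff_partial_sums_le[where N=N and u=u] zero_le_power2[of "norm ((a2 ^^ N) u)"]
    by linarith
qed

lemma h2_coeffs_transfer_fun: "h2_coeffs (Gamma H u) (\<lambda>n. c n u)"
proof -
  have "Gamma H u = h2_of_coeffs (\<lambda>n. c n u)" by (simp add: Gamma_def transfer_fun_def fun_eq_iff)
  then show ?thesis using h2_coeffs_h2_of_coeffs[OF coeff_l2_seq] by simp
qed

lemma transfer_fun_sums: "z \<in> ball 0 1 \<Longrightarrow> (\<lambda>n. z ^ n *\<^sub>C c n u) sums H z u"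
  unfolding transfer_fun_def by (rule h2_of_coeffs_sums[OF coeff_l2_seq])

lemma transfer_fun_add: "z \<in> ball 0 1 \<Longrightarrow> H z (x + y) = H z x + H z y"
proof -
  assume z: "z \<in> ball 0 1"
  have "(\<lambda>n. z ^ n *\<^sub>C c n x + z ^ n *\<^sub>C c n y) sums (H z x + H z y)"
    by (intro sums_add transfer_fun_sums z)
  then have "(\<lambda>n. z ^ n *\<^sub>C c n (x + y)) sums (H z x + H z y)"
    by (simp add: coeff_add scaleC_add_right)
  then show ?thesis using transfer_fun_sums[OF z, of "x + y"] sums_unique2 by blast
qed

lemma transfer_fun_scaleC: "z \<in> ball 0 1 \<Longrightarrow> H z (k *\<^sub>C x) = k *\<^sub>C H z x"
proof -
  assume z: "z \<in> ball 0 1"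
  have "(\<lambda>n. k *\<^sub>C (z ^ n *\<^sub>C c n x)) sums (k *\<^sub>C H z x)"
    by (rule sums_scaleC[OF transfer_fun_sums[OF z]])
  then have "(\<lambda>n. z ^ n *\<^sub>C c n (k *\<^sub>C x)) sums (k *\<^sub>C H z x)"
    by (simp add: coeff_scaleC scaleC_scaleC mult.commute)
  then show ?thesis using transfer_fun_sums[OF z, of "k *\<^sub>C x"] sums_unique2 by blast
qed

lemma norm_transfer_fun_le: "z \<in> ball 0 1 \<Longrightarrow> norm (H z u) \<le> norm u * (1 / (1 - norm z))"
proof -
  assume z: "z \<in> ball 0 1"
  then have zn: "norm z < 1" by simp
  have s1: "summable (\<lambda>n. norm (z ^ n *\<^sub>C c n u))"
    by (rule l2_seq_powser_summable[OF coeff_l2_seq zn])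
  have s2: "summable (\<lambda>n. norm u * norm z ^ n)" using zn
    by (intro summable_mult summable_geometric) simp
  have "H z u = (\<Sum>n. z ^ n *\<^sub>C c n u)" using transfer_fun_sums[OF z] sums_unique by blast
  then have "norm (H z u) \<le> (\<Sum>n. norm (z ^ n *\<^sub>C c n u))" using summable_norm[OF s1] by simp
  also have "\<dots> \<le> (\<Sum>n. norm u * norm z ^ n)"
  proof (rule suminf_le[OF _ s1 s2])
    fix n
    have "norm (z ^ n *\<^sub>C c n u) = norm z ^ n * norm (c n u)" by (simp add: norm_scaleC norm_power)
    also have "\<dots> \<le> norm z ^ n * norm u" using norm_coeff_le by (simp add: mult_left_mono)
    finally show "norm (z ^ n *\<^sub>C c n u) \<le> norm u * norm z ^ n" by (simp add: mult.commute)
  qed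
  also have "\<dots> = norm u * (1 / (1 - norm z))"
    using zn by (simp add: suminf_mult suminf_geometric summable_geometric)
  finally show ?thesis .
qed

lemma bounded_clinear_transfer_fun: "z \<in> ball 0 1 \<Longrightarrow> bounded_clinear_op (H z)"
  unfolding bounded_clinear_op_def clinear_on_def
  using transfer_fun_add transfer_fun_scaleC norm_transfer_fun_le by blast

lemma h2_norm_transfer_fun_le: "h2_norm (Gamma H u) \<le> norm u"
proof -
  have "h2_norm (Gamma H u) = sqrt (l2_norm2 (\<lambda>n. c n u))"
    by (rule h2_norm_eq[OF h2_coeffs_transfer_fun])
  also have "\<dots> \<le> sqrt ((norm u)\<^sup>2)" using coeff_l2_norm2_le[of u] by (rule real_sqrt_le_mono)
  finally show ?thesis by simp
qed

lemma transfer_fun_in_frakH2_ball: "in_frakH2_ball H"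
proof -
  have "in_H2 (Gamma H u)" for u using h2_coeffs_transfer_fun unfolding in_H2_def by blast
  moreover have "\<forall>u. h2_norm (Gamma H u) \<le> 1 * norm u" using h2_norm_transfer_fun_le by simp
  ultimately show ?thesis
    unfolding in_frakH2_ball_def in_frakH2_def using bounded_clinear_transfer_fun h2_norm_transfer_fun_le
    by blast
qed

lemma transfer_fun_recursion: "z \<in> ball 0 1 \<Longrightarrow> a1 x + z *\<^sub>C H z (a2 x) = H z x"
proof -
  assume z: "z \<in> ball 0 1"
  have "(\<lambda>n. z *\<^sub>C (z ^ n *\<^sub>C c n (a2 x))) sums (z *\<^sub>C H z (a2 x))"
    by (rule sums_scaleC[OF transfer_fun_sums[OF z]])
  then have "(\<lambda>n. z ^ Suc n *\<^sub>C c (Suc n) x) sums (z *\<^sub>C H z (a2 x))"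
    by (simp add: coeff_Suc scaleC_scaleC)
  then have "(\<lambda>n. z ^ n *\<^sub>C c n x) sums (z *\<^sub>C H z (a2 x) + z ^ 0 *\<^sub>C c 0 x)"
    by (subst (asm) sums_Suc_iff) simp
  then have "(\<lambda>n. z ^ n *\<^sub>C c n x) sums (z *\<^sub>C H z (a2 x) + a1 x)" by (simp add: coeff_0 scaleC_one)
  then have "H z x = z *\<^sub>C H z (a2 x) + a1 x" using sums_unique2[OF transfer_fun_sums[OF z]]
    by blast
  then show ?thesis by (simp add: add.commute)
qed

lemma bounded_linear_a1: "bounded_linear a1"
  by (rule bounded_linear_if_clinear[where K=1]) (use lin1 norm_a1_le in auto)

lemma bounded_linear_a2: "bounded_linear a2"
  by (rule bounded_linear_if_clinear[where K=1]) (use lin2 norm_a2_le in auto)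

lemma neumann_series_sums:
  assumes z: "norm z < 1"
  shows "(\<lambda>n. z ^ n *\<^sub>C (a2 ^^ n) u) sums (\<Sum>n. z ^ n *\<^sub>C (a2 ^^ n) u)"
proof -
  have "summable (\<lambda>n. norm (z ^ n *\<^sub>C (a2 ^^ n) u))"
  proof (rule summable_comparison_test)
    show "summable (\<lambda>n. norm u * norm z ^ n)" using z by (intro summable_mult summable_geometric) simp
    have "norm z ^ n * norm ((a2 ^^ n) u) \<le> norm z ^ n * norm u" for n
      using norm_a2_pow_le[of n u] by (simp add: mult_left_mono)
    then show "\<exists>N. \<forall>n\<ge>N. norm (norm (z ^ n *\<^sub>C (a2 ^^ n) u)) \<le> norm u * norm z ^ n"
      by (simp add: norm_scaleC norm_power mult.commute)
  qed
  then show ?thesis by (rule summable_sums[OF summable_norm_cancel])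
qed

lemma neumann_series_solves:
  assumes V: "(\<lambda>n. z ^ n *\<^sub>C (a2 ^^ n) u) sums V"
  shows "V = u + z *\<^sub>C a2 V"
proof -
  have "(\<lambda>n. z *\<^sub>C a2 (z ^ n *\<^sub>C (a2 ^^ n) u)) sums (z *\<^sub>C a2 V)"
    by (rule sums_scaleC[OF bounded_linear.sums[OF bounded_linear_a2 V]])
  then have "(\<lambda>n. z ^ Suc n *\<^sub>C (a2 ^^ Suc n) u) sums (z *\<^sub>C a2 V)"
    by (simp add: a2_scaleC scaleC_scaleC)
  then have "(\<lambda>n. z ^ n *\<^sub>C (a2 ^^ n) u) sums (z *\<^sub>C a2 V + z ^ 0 *\<^sub>C (a2 ^^ 0) u)"
    by (subst (asm) sums_Suc_iff)
  then have "(\<lambda>n. z ^ n *\<^sub>C (a2 ^^ n) u) sums (z *\<^sub>C a2 V + u)" by (simp add: scaleC_one)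
  then have "V = z *\<^sub>C a2 V + u" by (rule sums_unique2[OF V])
  then show ?thesis by (simp only: add.commute)
qed

lemma resolvent_equation_unique:
  assumes z: "norm z < 1" and v: "v = u + z *\<^sub>C a2 v" and w: "w = u + z *\<^sub>C a2 w"
  shows "v = w"
proof -
  \<comment> \<open>v - w is a fixed point of the strict contraction z a2\<close>
  have "v - w = (u + z *\<^sub>C a2 v) - (u + z *\<^sub>C a2 w)" using v w by (rule arg_cong2[where f="(-)"])
  also have "\<dots> = z *\<^sub>C (a2 v - a2 w)" by (simp add: scaleC_diff_right)
  also have "a2 v - a2 w = a2 (v - w)" using a2_add[of "v - w" w] by (simp add: eq_diff_eq)
  finally have "norm (v - w) = norm z * norm (a2 (v - w))" by (metis norm_scaleC)
  also have "\<dots> \<le> norm z * norm (v - w)" using norm_a2_le by (simp add: mult_left_mono)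
  finally have "(1 - norm z) * norm (v - w) \<le> 0" by (simp add: algebra_simps)
  then show ?thesis using z by (simp add: mult_le_0_iff)
qed

lemma transfer_fun_eq_resolvent:
  assumes z: "norm z < 1"
  shows "H z u = a1 (THE v. v - z *\<^sub>C a2 v = u)"
proof -
  define V where "V = (\<Sum>n. z ^ n *\<^sub>C (a2 ^^ n) u)"
  have V: "(\<lambda>n. z ^ n *\<^sub>C (a2 ^^ n) u) sums V" unfolding V_def by (rule neumann_series_sums[OF z])
  have "(THE v. v - z *\<^sub>C a2 v = u) = V"
  proof (rule the_equality)
    show "V - z *\<^sub>C a2 V = u" using neumann_series_solves[OF V] by (metis add_diff_cancel_right')
    show "v = V" if "v - z *\<^sub>C a2 v = u" for v
    proof -
      have "v = u + z *\<^sub>C a2 v" using that by (simp only: diff_eq_eq add.commute)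
      then show ?thesis using neumann_series_solves[OF V] by (rule resolvent_equation_unique[OF z])
    qed
  qed
  moreover have "(\<lambda>n. z ^ n *\<^sub>C c n u) sums a1 V"
    using bounded_linear.sums[OF bounded_linear_a1 V] by (simp add: a1_scaleC transfer_coeff_def)
  then have "a1 V = H z u" using z by (intro sums_unique2[OF _ transfer_fun_sums]) auto
  ultimately show ?thesis by simp
qed

lemma transfer_fun_interp_solution:
  assumes "\<And>x. x \<in> F \<Longrightarrow> a1 x = \<omega>1 x \<and> a2 x = \<omega>2 x"
  shows "H2_interp_solution F \<omega>1 \<omega>2 H"
  unfolding H2_interp_solution_def
proof (intro conjI ballI transfer_fun_in_frakH2_ball)
  fix z :: complex and x assume "z \<in> ball 0 1" "x \<in> F"
  then show "\<omega>1 x + z *\<^sub>C H z (\<omega>2 x) = H z x" using transfer_fun_recursion[of z x] assms[of x]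
    by simp
qed

end

lemma h2_coeffs_Gamma_cong:
  "(\<And>z. z \<in> ball 0 1 \<Longrightarrow> H z = H' z) \<Longrightarrow> h2_coeffs (Gamma H u) = h2_coeffs (Gamma H' u)"
  by (rule h2_coeffs_cong) (simp add: Gamma_def)

lemma in_frakH2_cong:
  assumes "\<And>z. z \<in> ball 0 1 \<Longrightarrow> H z = H' z"
  shows "in_frakH2 H = in_frakH2 H'"
proof -
  have c: "\<And>u. h2_coeffs (Gamma H u) = h2_coeffs (Gamma H' u)"
    using h2_coeffs_Gamma_cong[OF assms] .
  have i: "\<And>u. in_H2 (Gamma H u) = in_H2 (Gamma H' u)" by (simp add: in_H2_def c)
  have n: "\<And>u. h2_norm (Gamma H u) = h2_norm (Gamma H' u)" by (simp add: h2_norm_def h2_coeff_def c)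
  show ?thesis unfolding in_frakH2_def using assms i n by auto
qed

lemma in_frakH2_ball_cong:
  assumes "\<And>z. z \<in> ball 0 1 \<Longrightarrow> H z = H' z"
  shows "in_frakH2_ball H = in_frakH2_ball H'"
proof -
  have c: "\<And>u. h2_coeffs (Gamma H u) = h2_coeffs (Gamma H' u)"
    using h2_coeffs_Gamma_cong[OF assms] .
  have n: "\<And>u. h2_norm (Gamma H u) = h2_norm (Gamma H' u)" by (simp add: h2_norm_def h2_coeff_def c)
  show ?thesis unfolding in_frakH2_ball_def using in_frakH2_cong[OF assms] n by auto
qed

lemma H2_interp_solution_cong:
  assumes "\<And>z. z \<in> ball 0 1 \<Longrightarrow> H z = H' z"
  shows "H2_interp_solution F \<omega>1 \<omega>2 H = H2_interp_solution F \<omega>1 \<omega>2 H'"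
  unfolding H2_interp_solution_def using in_frakH2_ball_cong[OF assms] assms by auto

lemma Gamma_coisometry_cong:
  assumes "\<And>z. z \<in> ball 0 1 \<Longrightarrow> H z = H' z"
  shows "Gamma_coisometry H = Gamma_coisometry H'"
proof -
  have c: "\<And>u. h2_coeffs (Gamma H u) = h2_coeffs (Gamma H' u)"
    using h2_coeffs_Gamma_cong[OF assms] .
  have i: "\<And>u g. h2_inner (Gamma H u) g = h2_inner (Gamma H' u) g"
    by (simp add: h2_inner_def h2_coeff_def c)
  have g: "\<And>u z. z \<in> ball 0 1 \<Longrightarrow> Gamma H u z = Gamma H' u z" by (simp add: Gamma_def assms)
  show ?thesis unfolding Gamma_coisometry_def using in_frakH2_cong[OF assms] i g by auto
qed

locale interp_data =
  fixes F :: "'u::complex_hilbert set" and \<omega>1 :: "'u \<Rightarrow> 'y::complex_hilbert" and \<omega>2 :: "'u \<Rightarrow> 'u"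
  assumes sub: "csubspace F" and cl: "closed F" and ne: "F \<noteq> UNIV"
    and lin1: "clinear_on F \<omega>1" and lin2: "clinear_on F \<omega>2"
    and contrF: "\<forall>x\<in>F. (norm (\<omega>1 x))\<^sup>2 + (norm (\<omega>2 x))\<^sup>2 \<le> (norm x)\<^sup>2"
begin

sublocale closed_csubspace F by standard (fact sub, fact cl)

abbreviation "P \<equiv> orth_proj F"

text \<open>\<omega>1P and \<omega>2P are \<omega>1 \<Pi>_F and \<omega>2 \<Pi>_F; the central solution is their transfer function.\<close>
definition \<omega>1P where "\<omega>1P u = \<omega>1 (P u)"
definition \<omega>2P where "\<omega>2P u = \<omega>2 (P u)"

lemma \<omega>1_add: "x \<in> F \<Longrightarrow> y \<in> F \<Longrightarrow> \<omega>1 (x + y) = \<omega>1 x + \<omega>1 y" using lin1 by (rule clinear_on_addD)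
lemma \<omega>2_add: "x \<in> F \<Longrightarrow> y \<in> F \<Longrightarrow> \<omega>2 (x + y) = \<omega>2 x + \<omega>2 y" using lin2 by (rule clinear_on_addD)
lemma \<omega>1_scaleC: "x \<in> F \<Longrightarrow> \<omega>1 (k *\<^sub>C x) = k *\<^sub>C \<omega>1 x" using lin1 by (rule clinear_on_scaleCD)
lemma \<omega>2_scaleC: "x \<in> F \<Longrightarrow> \<omega>2 (k *\<^sub>C x) = k *\<^sub>C \<omega>2 x" using lin2 by (rule clinear_on_scaleCD)
lemma \<omega>1_diff: "x \<in> F \<Longrightarrow> y \<in> F \<Longrightarrow> \<omega>1 (x - y) = \<omega>1 x - \<omega>1 y" using lin1 sub by (rule clinear_on_diffD)
lemma \<omega>2_diff: "x \<in> F \<Longrightarrow> y \<in> F \<Longrightarrow> \<omega>2 (x - y) = \<omega>2 x - \<omega>2 y" using lin2 sub by (rule clinear_on_diffD)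
lemma \<omega>1_zero: "\<omega>1 0 = 0" using lin1 sub by (rule clinear_on_zero)
lemma \<omega>2_zero: "\<omega>2 0 = 0" using lin2 sub by (rule clinear_on_zero)

lemma norm_\<omega>1_le: "x \<in> F \<Longrightarrow> norm (\<omega>1 x) \<le> norm x"
  using contrF by (intro norm_le_if_sq_add_le[of _ "(norm (\<omega>2 x))\<^sup>2"]) auto

lemma norm_\<omega>2_le: "x \<in> F \<Longrightarrow> norm (\<omega>2 x) \<le> norm x"
  using contrF by (intro norm_le_if_sq_add_le[of _ "(norm (\<omega>1 x))\<^sup>2"]) (auto simp: add.commute)

sublocale C: contractive_colligation \<omega>1P \<omega>2P
proof
  show "clinear_on UNIV \<omega>1P"
    unfolding clinear_on_def \<omega>1P_def
    by (simp add: orth_proj_add orth_proj_scaleC \<omega>1_add \<omega>1_scaleC orth_proj_in)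
  show "clinear_on UNIV \<omega>2P"
    unfolding clinear_on_def \<omega>2P_def
    by (simp add: orth_proj_add orth_proj_scaleC \<omega>2_add \<omega>2_scaleC orth_proj_in)
  show "(norm (\<omega>1P u))\<^sup>2 + (norm (\<omega>2P u))\<^sup>2 \<le> (norm u)\<^sup>2" for u
  proof -
    have "(norm (\<omega>1P u))\<^sup>2 + (norm (\<omega>2P u))\<^sup>2 \<le> (norm (P u))\<^sup>2"
      unfolding \<omega>1P_def \<omega>2P_def using contrF orth_proj_in by blast
    also have "\<dots> \<le> (norm u)\<^sup>2" using norm_orth_proj_le[of u] by (simp add: power_mono)
    finally show ?thesis .
  qed
qed

abbreviation "Hc_coeff \<equiv> transfer_coeff \<omega>1P \<omega>2P"
abbreviation "Hc \<equiv> transfer_fun \<omega>1P \<omega>2P"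

lemma \<omega>P_on_F: "x \<in> F \<Longrightarrow> \<omega>1P x = \<omega>1 x \<and> \<omega>2P x = \<omega>2 x"
  by (simp add: \<omega>1P_def \<omega>2P_def orth_proj_id)

lemma Hc_interp_solution: "H2_interp_solution F \<omega>1 \<omega>2 Hc"
  by (rule C.transfer_fun_interp_solution) (rule \<omega>P_on_F)

lemma Hc_coeff_orth_proj: "Hc_coeff n u = Hc_coeff n (P u)"
  by (cases n)
    (simp_all add: transfer_coeff_def \<omega>1P_def \<omega>2P_def orth_proj_idem funpow_Suc_right
      del: funpow.simps)

lemma Hc_coeff_zero: "Hc_coeff n 0 = 0"
  using C.coeff_scaleC[of n 0 0] by simp

lemma Hc_coeff_eq_0_if_orth: "P w = 0 \<Longrightarrow> Hc_coeff n w = 0"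
  using Hc_coeff_orth_proj[of n w] Hc_coeff_zero[of n] by simp

lemma Hc_coeff_0_on_F: "x \<in> F \<Longrightarrow> Hc_coeff 0 x = \<omega>1 x" by (simp add: C.coeff_0 \<omega>P_on_F)
lemma Hc_coeff_Suc_on_F: "x \<in> F \<Longrightarrow> Hc_coeff (Suc n) x = Hc_coeff n (\<omega>2 x)"
  by (simp add: C.coeff_Suc \<omega>P_on_F)

lemma Hc_coeff_diff: "Hc_coeff n (x - y) = Hc_coeff n x - Hc_coeff n y"
  using C.coeff_add[of n "x - y" y] by (simp add: eq_diff_eq)

lemma central_solution_eq_Hc:
  assumes "z \<in> ball 0 1"
  shows "central_solution F \<omega>1 \<omega>2 z = Hc z"
proof
  fix u
  have "central_solution F \<omega>1 \<omega>2 z u = \<omega>1P (THE v. v - z *\<^sub>C \<omega>2P v = u)"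
    by (simp add: central_solution_def \<omega>1P_def \<omega>2P_def)
  also have "\<dots> = Hc z u" using assms by (simp add: C.transfer_fun_eq_resolvent)
  finally show "central_solution F \<omega>1 \<omega>2 z u = Hc z u" .
qed

end

section \<open>A co-isometric \<Gamma>_{H_c} forces uniqueness\<close>

lemma eq_0_if_quadratic_bound:
  fixes G W :: real
  assumes bound: "\<And>t. t > 0 \<Longrightarrow> (t + 1)\<^sup>2 * G \<le> t\<^sup>2 * G + W" and "0 \<le> G"
  shows "G = 0"
proof (rule ccontr)
  assume "G \<noteq> 0"
  with \<open>0 \<le> G\<close> have G: "G > 0" by simp
  define t where "t = \<bar>W\<bar> / G + 1"
  have t: "t > 0" and tG: "t * G = \<bar>W\<bar> + G" using G
    by (simp_all add: t_def add_nonneg_pos field_simps)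
  have "(t + 1)\<^sup>2 * G = t\<^sup>2 * G + 2 * (t * G) + G" by (simp add: power2_eq_square algebra_simps)
  then show False using bound[OF t] tG G by linarith
qed

locale solution = interp_data +
  fixes H assumes solution: "H2_interp_solution F \<omega>1 \<omega>2 H"
begin

definition H_coeff where "H_coeff n u = h2_coeff (Gamma H u) n"

lemma H_in_frakH2_ball: "in_frakH2_ball H" using solution by (simp add: H2_interp_solution_def)
lemma H_in_frakH2: "in_frakH2 H" using H_in_frakH2_ball by (simp add: in_frakH2_ball_def)

lemma h2_coeffs_H: "h2_coeffs (Gamma H u) (\<lambda>n. H_coeff n u)"
proof -
  have "in_H2 (Gamma H u)" using H_in_frakH2 by (simp add: in_frakH2_def)
  from h2_coeffs_h2_coeff[OF this] show ?thesis by (simp add: H_coeff_def[abs_def])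
qed

lemma H_coeff_l2_seq: "l2_seq (\<lambda>n. H_coeff n u)" by (rule h2_coeffs_l2_seq[OF h2_coeffs_H])

lemma H_coeff_l2_norm2_le: "l2_norm2 (\<lambda>n. H_coeff n u) \<le> (norm u)\<^sup>2"
proof -
  have "h2_norm (Gamma H u) \<le> norm u" using H_in_frakH2_ball by (simp add: in_frakH2_ball_def)
  then have "sqrt (l2_norm2 (\<lambda>n. H_coeff n u)) \<le> norm u" by (simp add: h2_norm_eq[OF h2_coeffs_H])
  then show ?thesis by (rule sqrt_le_D)
qed

lemma H_clinear: "z \<in> ball 0 1 \<Longrightarrow> H z (x + y) = H z x + H z y \<and> H z (k *\<^sub>C x) = k *\<^sub>C H z x"
  using H_in_frakH2 by (auto simp: in_frakH2_def bounded_clinear_op_def clinear_on_def)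

lemma H_sums: "z \<in> ball 0 1 \<Longrightarrow> (\<lambda>n. z ^ n *\<^sub>C H_coeff n u) sums H z u"
  using h2_coeffs_H[of u] by (simp add: h2_coeffs_def Gamma_def)

lemma H_coeff_add: "H_coeff n (x + y) = H_coeff n x + H_coeff n y"
proof -
  have "h2_coeffs (Gamma H (x + y)) (\<lambda>n. H_coeff n x + H_coeff n y)"
    unfolding h2_coeffs_def
  proof (intro conjI ballI)
    show "summable (\<lambda>n. (norm (H_coeff n x + H_coeff n y))\<^sup>2)"
      using l2_seq_add[OF H_coeff_l2_seq H_coeff_l2_seq] by (simp add: l2_seq_def)
    fix z :: complex assume z: "z \<in> ball 0 1"
    have "(\<lambda>n. z ^ n *\<^sub>C H_coeff n x + z ^ n *\<^sub>C H_coeff n y) sums (H z x + H z y)"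
      by (intro sums_add H_sums z)
    then show "(\<lambda>n. z ^ n *\<^sub>C (H_coeff n x + H_coeff n y)) sums Gamma H (x + y) z"
      using H_clinear[OF z] by (simp add: Gamma_def scaleC_add_right)
  qed
  from h2_coeffs_unique[OF h2_coeffs_H this] show ?thesis by (simp add: fun_eq_iff)
qed

lemma H_coeff_scaleC: "H_coeff n (k *\<^sub>C x) = k *\<^sub>C H_coeff n x"
proof -
  have "h2_coeffs (Gamma H (k *\<^sub>C x)) (\<lambda>n. k *\<^sub>C H_coeff n x)"
    unfolding h2_coeffs_def
  proof (intro conjI ballI)
    show "summable (\<lambda>n. (norm (k *\<^sub>C H_coeff n x))\<^sup>2)"
      using l2_seq_scaleC[OF H_coeff_l2_seq] by (simp add: l2_seq_def)
    fix z :: complex assume z: "z \<in> ball 0 1"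
    have "(\<lambda>n. k *\<^sub>C (z ^ n *\<^sub>C H_coeff n x)) sums (k *\<^sub>C H z x)"
      by (rule sums_scaleC[OF H_sums[OF z]])
    then show "(\<lambda>n. z ^ n *\<^sub>C (k *\<^sub>C H_coeff n x)) sums Gamma H (k *\<^sub>C x) z"
      using H_clinear[OF z] by (simp add: Gamma_def scaleC_scaleC mult.commute)
  qed
  from h2_coeffs_unique[OF h2_coeffs_H this] show ?thesis by (simp add: fun_eq_iff)
qed

lemma H_coeff_recursion:
  assumes x: "x \<in> F"
  shows "H_coeff 0 x = \<omega>1 x \<and> H_coeff (Suc n) x = H_coeff n (\<omega>2 x)"
proof -
  define s where "s n = (case n of 0 \<Rightarrow> \<omega>1 x | Suc m \<Rightarrow> H_coeff m (\<omega>2 x))" for n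
  have "h2_coeffs (Gamma H x) s"
    unfolding h2_coeffs_def
  proof (intro conjI ballI)
    have "summable (\<lambda>n. (norm (s (Suc n)))\<^sup>2)" using H_coeff_l2_seq by (simp add: s_def l2_seq_def)
    then show "summable (\<lambda>n. (norm (s n))\<^sup>2)" using summable_Suc_iff[of "\<lambda>n. (norm (s n))\<^sup>2"]
      by simp
    fix z :: complex assume z: "z \<in> ball 0 1"
    have "(\<lambda>n. z *\<^sub>C (z ^ n *\<^sub>C H_coeff n (\<omega>2 x))) sums (z *\<^sub>C H z (\<omega>2 x))"
      by (rule sums_scaleC[OF H_sums[OF z]])
    then have "(\<lambda>n. z ^ Suc n *\<^sub>C s (Suc n)) sums (z *\<^sub>C H z (\<omega>2 x))"
      by (simp add: s_def scaleC_scaleC)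
    then have "(\<lambda>n. z ^ n *\<^sub>C s n) sums (z *\<^sub>C H z (\<omega>2 x) + z ^ 0 *\<^sub>C s 0)"
      by (subst (asm) sums_Suc_iff)
    then have "(\<lambda>n. z ^ n *\<^sub>C s n) sums (\<omega>1 x + z *\<^sub>C H z (\<omega>2 x))"
      by (simp add: s_def scaleC_one add.commute)
    moreover have "\<omega>1 x + z *\<^sub>C H z (\<omega>2 x) = H z x"
      using solution x z by (simp add: H2_interp_solution_def)
    ultimately show "(\<lambda>n. z ^ n *\<^sub>C s n) sums Gamma H x z" by (simp add: Gamma_def)
  qed
  from h2_coeffs_unique[OF h2_coeffs_H this] have "(\<lambda>n. H_coeff n x) = s" .
  then show ?thesis by (simp add: fun_eq_iff s_def split: nat.splits)
qed

end

locale Hc_coisometry = interp_data F \<omega>1 \<omega>2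
  for F :: "'u::complex_hilbert set" and \<omega>1 :: "'u \<Rightarrow> 'y::complex_hilbert" and \<omega>2 :: "'u \<Rightarrow> 'u" +
  fixes A :: "(complex \<Rightarrow> 'y) \<Rightarrow> 'u"
  assumes A1: "\<forall>g u. in_H2 g \<longrightarrow>
      h2_inner (Gamma (transfer_fun (interp_data.\<omega>1P F \<omega>1) (interp_data.\<omega>2P F \<omega>2)) u) g = cinner u (A g)"
    and A2: "\<forall>g. in_H2 g \<longrightarrow> (\<forall>z\<in>ball 0 1.
      Gamma (transfer_fun (interp_data.\<omega>1P F \<omega>1) (interp_data.\<omega>2P F \<omega>2)) (A g) z = g z)"
begin

definition A_coeffs where "A_coeffs \<gamma> = A (h2_of_coeffs \<gamma>)"
definition Hc_isometric_at where "Hc_isometric_at v \<longleftrightarrow> l2_norm2 (\<lambda>n. Hc_coeff n v) = (norm v)\<^sup>2"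

lemma Hc_coeff_A_coeffs:
  assumes "l2_seq \<gamma>"
  shows "Hc_coeff n (A_coeffs \<gamma>) = \<gamma> n"
proof -
  have hg: "h2_coeffs (h2_of_coeffs \<gamma>) \<gamma>" by (rule h2_coeffs_h2_of_coeffs[OF assms])
  then have "in_H2 (h2_of_coeffs \<gamma>)" by (auto simp: in_H2_def)
  then have "h2_coeffs (Gamma Hc (A_coeffs \<gamma>)) = h2_coeffs (h2_of_coeffs \<gamma>)"
    unfolding A_coeffs_def using A2 by (intro h2_coeffs_cong) auto
  then have "h2_coeffs (Gamma Hc (A_coeffs \<gamma>)) \<gamma>" using hg by simp
  from h2_coeffs_unique[OF C.h2_coeffs_transfer_fun this] show ?thesis by (simp add: fun_eq_iff)
qed

lemma cinner_A_coeffs: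
  assumes "l2_seq \<gamma>"
  shows "cinner u (A_coeffs \<gamma>) = l2_inner (\<lambda>n. Hc_coeff n u) \<gamma>"
proof -
  have hg: "h2_coeffs (h2_of_coeffs \<gamma>) \<gamma>" by (rule h2_coeffs_h2_of_coeffs[OF assms])
  then have "in_H2 (h2_of_coeffs \<gamma>)" by (auto simp: in_H2_def)
  then have "cinner u (A_coeffs \<gamma>) = h2_inner (Gamma Hc u) (h2_of_coeffs \<gamma>)" using A1
    by (simp add: A_coeffs_def)
  also have "\<dots> = l2_inner (\<lambda>n. Hc_coeff n u) \<gamma>"
    by (rule h2_inner_eq[OF C.h2_coeffs_transfer_fun hg])
  finally show ?thesis .
qed

lemma norm_A_coeffs:
  assumes "l2_seq \<gamma>"
  shows "(norm (A_coeffs \<gamma>))\<^sup>2 = l2_norm2 \<gamma>"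
proof -
  have "cinner (A_coeffs \<gamma>) (A_coeffs \<gamma>) = l2_inner \<gamma> \<gamma>"
    using cinner_A_coeffs[OF assms] Hc_coeff_A_coeffs[OF assms] by simp
  also have "\<dots> = complex_of_real (l2_norm2 \<gamma>)" by (rule l2_inner_self[OF assms])
  finally show ?thesis by (metis cinner_self_norm of_real_eq_iff)
qed

lemma Hc_isometric_at_A_coeffs:
  assumes "l2_seq \<gamma>"
  shows "Hc_isometric_at (A_coeffs \<gamma>)"
  unfolding Hc_isometric_at_def using Hc_coeff_A_coeffs[OF assms] norm_A_coeffs[OF assms] by simp

lemma Hc_isometric_at_eq_A_coeffs:
  assumes "Hc_isometric_at v"
  shows "v = A_coeffs (\<lambda>n. Hc_coeff n v)"
proof -
  define \<gamma> where "\<gamma> n = Hc_coeff n v" for n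
  have g: "l2_seq \<gamma>" unfolding \<gamma>_def by (rule C.coeff_l2_seq)
  define m where "m = A_coeffs \<gamma>"
  have "cinner v m = complex_of_real (l2_norm2 \<gamma>)"
    unfolding m_def using cinner_A_coeffs[OF g, of v] l2_inner_self[OF g]
    by (simp add: \<gamma>_def[abs_def])
  moreover have "(norm m)\<^sup>2 = l2_norm2 \<gamma>" unfolding m_def by (rule norm_A_coeffs[OF g])
  moreover have "l2_norm2 \<gamma> = (norm v)\<^sup>2" using assms
    by (simp add: Hc_isometric_at_def \<gamma>_def[abs_def])
  ultimately have "(norm (v - m))\<^sup>2 = 0" by (simp add: norm_diff_sq)
  then show ?thesis by (simp add: m_def \<gamma>_def[abs_def])
qed

lemma A_coeffs_in_F:
  assumes "l2_seq \<gamma>"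
  shows "A_coeffs \<gamma> \<in> F"
proof -
  define m where "m = A_coeffs \<gamma>"
  define w where "w = m - P m"
  have Pw: "P w = 0" by (simp add: w_def orth_proj_diff orth_proj_idem)
  have "cinner w m = l2_inner (\<lambda>n. Hc_coeff n w) \<gamma>" unfolding m_def
    by (rule cinner_A_coeffs[OF assms])
  also have "\<dots> = 0" using Hc_coeff_eq_0_if_orth[OF Pw] by (simp add: l2_inner_zero_left)
  finally have "cinner w m = 0" .
  moreover have "cinner w (P m) = 0" unfolding w_def by (rule orth_proj_orth'[OF orth_proj_in])
  ultimately have "cinner w w = 0" by (simp add: w_def cinner_diff_right)
  then have "m = P m" by (simp add: w_def)
  then show ?thesis using orth_proj_in m_def by metis
qed

lemma Hc_isometric_at_in_F: "Hc_isometric_at v \<Longrightarrow> v \<in> F"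
  using Hc_isometric_at_eq_A_coeffs A_coeffs_in_F C.coeff_l2_seq by metis

lemma Hc_isometric_at_\<omega>2:
  assumes "Hc_isometric_at v"
  shows "Hc_isometric_at (\<omega>2 v)"
proof -
  have vF: "v \<in> F" by (rule Hc_isometric_at_in_F[OF assms])
  have "l2_norm2 (\<lambda>n. Hc_coeff n v) = (norm (Hc_coeff 0 v))\<^sup>2 + l2_norm2 (\<lambda>n. Hc_coeff (Suc n) v)"
    by (rule l2_norm2_split_head[OF C.coeff_l2_seq])
  also have "\<dots> = (norm (\<omega>1 v))\<^sup>2 + l2_norm2 (\<lambda>n. Hc_coeff n (\<omega>2 v))"
    by (simp add: Hc_coeff_0_on_F Hc_coeff_Suc_on_F vF)
  finally have e: "(norm v)\<^sup>2 = (norm (\<omega>1 v))\<^sup>2 + l2_norm2 (\<lambda>n. Hc_coeff n (\<omega>2 v))"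
    using assms by (simp add: Hc_isometric_at_def)
  have "l2_norm2 (\<lambda>n. Hc_coeff n (\<omega>2 v)) \<le> (norm (\<omega>2 v))\<^sup>2" by (rule C.coeff_l2_norm2_le)
  moreover have "(norm (\<omega>1 v))\<^sup>2 + (norm (\<omega>2 v))\<^sup>2 \<le> (norm v)\<^sup>2" using contrF vF by blast
  ultimately show ?thesis unfolding Hc_isometric_at_def using e by linarith
qed

end

locale Hc_coisometry_solution = Hc_coisometry + solution
begin

lemma H_coeff_eq_Hc_coeff_if_isometric: "Hc_isometric_at u \<Longrightarrow> H_coeff n u = Hc_coeff n u"
proof (induction n arbitrary: u)
  case 0
  then show ?case using Hc_isometric_at_in_F by (simp add: H_coeff_recursion Hc_coeff_0_on_F)
next
  case (Suc n)
  then show ?case using Suc.IH[OF Hc_isometric_at_\<omega>2] Hc_isometric_at_in_F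
    by (simp add: H_coeff_recursion Hc_coeff_Suc_on_F)
qed

lemma H_coeff_diff: "H_coeff n (x - y) = H_coeff n x - H_coeff n y"
  using H_coeff_add[of n "x - y" y] by (simp add: eq_diff_eq)

lemma H_coeff_eq_0_if_Hc_coeff_eq_0: assumes w0: "\<And>n. Hc_coeff n w = 0" shows "H_coeff n w = 0"
proof -
  define \<gamma> where "\<gamma> n = H_coeff n w" for n
  have g: "l2_seq \<gamma>" unfolding \<gamma>_def by (rule H_coeff_l2_seq)
  define m where "m = A_coeffs \<gamma>"
  have Mm: "Hc_isometric_at m" unfolding m_def by (rule Hc_isometric_at_A_coeffs[OF g])
  have hm: "H_coeff k m = \<gamma> k" for k
    using H_coeff_eq_Hc_coeff_if_isometric[OF Mm] Hc_coeff_A_coeffs[OF g] by (simp add: m_def)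
  have "cinner w m = 0" unfolding m_def using cinner_A_coeffs[OF g, of w] w0
    by (simp add: l2_inner_zero_left)
  then have mw: "cinner m w = 0" by (simp add: cinner_eq_zero_sym)
  define G where "G = l2_norm2 \<gamma>"
  have G0: "G \<ge> 0" unfolding G_def by (rule l2_norm2_nonneg[OF g])
  have nm: "(norm m)\<^sup>2 = G" unfolding m_def G_def by (rule norm_A_coeffs[OF g])
  \<comment> \<open>\<Gamma>_H maps t m + w to the sequence (t + 1) \<gamma>, but \<Gamma>_H is a contraction\<close>
  have "(t + 1)\<^sup>2 * G \<le> t\<^sup>2 * G + (norm w)\<^sup>2" if t: "t > 0" for t :: real
  proof -
    define x where "x = complex_of_real t *\<^sub>C m + w"
    have "H_coeff k x = complex_of_real (t + 1) *\<^sub>C \<gamma> k" for k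
      by (simp add: x_def H_coeff_add H_coeff_scaleC hm \<gamma>_def scaleC_add_left scaleC_one)
    then have "l2_norm2 (\<lambda>k. H_coeff k x) = (t + 1)\<^sup>2 * G"
      using l2_norm2_scaleC[OF g, of "complex_of_real (t + 1)"] t by (simp add: G_def)
    moreover have "(norm x)\<^sup>2 = t\<^sup>2 * G + (norm w)\<^sup>2"
      unfolding x_def norm_add_sq using t mw nm
      by (simp add: cinner_scaleC_left norm_scaleC power_mult_distrib)
    ultimately show ?thesis using H_coeff_l2_norm2_le[of x] by simp
  qed
  then have "G = 0" using G0 by (intro eq_0_if_quadratic_bound)
  then have "\<gamma> n = 0" using l2_norm2_eq_0_iff[OF g] by (simp add: G_def)
  then show ?thesis by (simp add: \<gamma>_def)
qed

lemma H_coeff_eq_Hc_coeff: "H_coeff n v = Hc_coeff n v"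
proof -
  define m where "m = A_coeffs (\<lambda>k. Hc_coeff k v)"
  have g: "l2_seq (\<lambda>k. Hc_coeff k v)" by (rule C.coeff_l2_seq)
  have cm: "Hc_coeff k m = Hc_coeff k v" for k unfolding m_def by (rule Hc_coeff_A_coeffs[OF g])
  have "Hc_coeff k (v - m) = 0" for k by (simp add: Hc_coeff_diff cm)
  then have "H_coeff n (v - m) = 0" by (rule H_coeff_eq_0_if_Hc_coeff_eq_0)
  moreover have "H_coeff n m = Hc_coeff n m"
    by (rule H_coeff_eq_Hc_coeff_if_isometric) (simp add: m_def Hc_isometric_at_A_coeffs[OF g])
  ultimately show ?thesis using H_coeff_diff[of n v m] cm by simp
qed

lemma H_eq_Hc: assumes z: "z \<in> ball 0 1" shows "H z = Hc z"
proof
  fix u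
  have "(\<lambda>n. z ^ n *\<^sub>C Hc_coeff n u) sums H z u" using H_sums[OF z, of u]
    by (simp add: H_coeff_eq_Hc_coeff)
  then show "H z u = Hc z u" by (rule sums_unique2[OF _ C.transfer_fun_sums[OF z]])
qed

end

section \<open>The adjoint of \<Gamma>_{H_c} and the defect of \<omega>\<close>

lemma le_if_square_le_mult:
  fixes q K :: real
  assumes "q\<^sup>2 \<le> K * q" "0 \<le> q" "0 \<le> K"
  shows "q \<le> K"
  using assms by (cases "q = 0") (simp_all add: power2_eq_square)

lemma Cauchy_Schwarz_real2:
  fixes Y V a b :: real
  shows "(Y * a + V * b)\<^sup>2 \<le> (Y\<^sup>2 + V\<^sup>2) * (a\<^sup>2 + b\<^sup>2)"
proof -
  have "0 \<le> (Y*b - V*a)\<^sup>2" by simp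
  then show ?thesis unfolding power2_eq_square by (simp add: algebra_simps)
qed

context interp_data
begin

lemma norm_l2_inner_Hc_coeff_le:
  assumes g: "l2_seq \<gamma>"
  shows "cmod (l2_inner \<gamma> (\<lambda>n. Hc_coeff n x)) \<le> sqrt (l2_norm2 \<gamma>) * norm x"
proof -
  have "cmod (l2_inner \<gamma> (\<lambda>n. Hc_coeff n x))
      \<le> sqrt (l2_norm2 \<gamma>) * sqrt (l2_norm2 (\<lambda>n. Hc_coeff n x))"
    by (rule l2_Cauchy_Schwarz[OF g C.coeff_l2_seq])
  also have "\<dots> \<le> sqrt (l2_norm2 \<gamma>) * norm x"
    using real_sqrt_le_mono[OF C.coeff_l2_norm2_le[of x]] l2_norm2_nonneg[OF g]
    by (intro mult_left_mono) auto
  finally show ?thesis .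
qed

definition Gamma_adjoint where
  "Gamma_adjoint \<gamma> = (SOME f. \<forall>x. l2_inner \<gamma> (\<lambda>n. Hc_coeff n x) = cinner f x)"

lemma cinner_Gamma_adjoint:
  assumes g: "l2_seq \<gamma>"
  shows "cinner (Gamma_adjoint \<gamma>) x = l2_inner \<gamma> (\<lambda>n. Hc_coeff n x)"
proof -
  have "\<exists>f\<in>UNIV. \<forall>x\<in>UNIV. l2_inner \<gamma> (\<lambda>n. Hc_coeff n x) = cinner f x"
  proof (rule closed_csubspace.riesz_representation[OF closed_csubspace_UNIV,
        where K="sqrt (l2_norm2 \<gamma>)"])
    show "l2_inner \<gamma> (\<lambda>n. Hc_coeff n (x + y))
        = l2_inner \<gamma> (\<lambda>n. Hc_coeff n x) + l2_inner \<gamma> (\<lambda>n. Hc_coeff n y)" for x y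
      by (simp add: C.coeff_add l2_inner_add_right[OF g C.coeff_l2_seq C.coeff_l2_seq])
    show "l2_inner \<gamma> (\<lambda>n. Hc_coeff n (c *\<^sub>C x)) = c * l2_inner \<gamma> (\<lambda>n. Hc_coeff n x)" for c x
      by (simp add: C.coeff_scaleC l2_inner_scaleC_right[OF g C.coeff_l2_seq])
    show "cmod (l2_inner \<gamma> (\<lambda>n. Hc_coeff n x)) \<le> sqrt (l2_norm2 \<gamma>) * norm x" for x
      by (rule norm_l2_inner_Hc_coeff_le[OF g])
  qed
  then have "\<exists>f. \<forall>x. l2_inner \<gamma> (\<lambda>n. Hc_coeff n x) = cinner f x" by simp
  then have "\<forall>x. l2_inner \<gamma> (\<lambda>n. Hc_coeff n x) = cinner (Gamma_adjoint \<gamma>) x"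
    unfolding Gamma_adjoint_def by (rule someI_ex)
  then show ?thesis by simp
qed

lemma norm_Gamma_adjoint_le:
  assumes g: "l2_seq \<gamma>"
  shows "(norm (Gamma_adjoint \<gamma>))\<^sup>2 \<le> l2_norm2 \<gamma>"
proof -
  define X where "X = Gamma_adjoint \<gamma>"
  have "(norm X)\<^sup>2 = Re (cinner X X)" by (simp add: norm_sq_cinner)
  also have "\<dots> \<le> cmod (l2_inner \<gamma> (\<lambda>n. Hc_coeff n X))"
    unfolding X_def by (simp add: cinner_Gamma_adjoint[OF g] complex_Re_le_cmod)
  also have "\<dots> \<le> sqrt (l2_norm2 \<gamma>) * norm X" by (rule norm_l2_inner_Hc_coeff_le[OF g])
  finally have "norm X \<le> sqrt (l2_norm2 \<gamma>)"
    by (rule le_if_square_le_mult) (use l2_norm2_nonneg[OF g] in simp_all)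
  then have "(norm X)\<^sup>2 \<le> (sqrt (l2_norm2 \<gamma>))\<^sup>2" by (rule power_mono) simp
  then show ?thesis using l2_norm2_nonneg[OF g] by (simp add: X_def)
qed

definition \<omega>_adjoint where
  "\<omega>_adjoint y v = (SOME f. f \<in> F \<and> (\<forall>x\<in>F. cinner f x = cinner y (\<omega>1 x) + cinner v (\<omega>2 x)))"

lemma \<omega>_adjoint_char:
  "\<omega>_adjoint y v \<in> F \<and> (\<forall>x\<in>F. cinner (\<omega>_adjoint y v) x = cinner y (\<omega>1 x) + cinner v (\<omega>2 x))"
proof -
  have "\<exists>f\<in>F. \<forall>x\<in>F. cinner y (\<omega>1 x) + cinner v (\<omega>2 x) = cinner f x"
  proof (rule riesz_representation[where K="norm y + norm v"])
    show "cinner y (\<omega>1 (x + x')) + cinner v (\<omega>2 (x + x')) =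
        cinner y (\<omega>1 x) + cinner v (\<omega>2 x) + (cinner y (\<omega>1 x') + cinner v (\<omega>2 x'))"
      if "x \<in> F" "x' \<in> F" for x x'
      using that by (simp add: \<omega>1_add \<omega>2_add cinner_add_right)
    show "cinner y (\<omega>1 (c *\<^sub>C x)) + cinner v (\<omega>2 (c *\<^sub>C x))
        = c * (cinner y (\<omega>1 x) + cinner v (\<omega>2 x))" if "x \<in> F" for c x
      using that by (simp add: \<omega>1_scaleC \<omega>2_scaleC cinner_scaleC_right algebra_simps)
    show "cmod (cinner y (\<omega>1 x) + cinner v (\<omega>2 x)) \<le> (norm y + norm v) * norm x" if x: "x \<in> F" for x
    proof -
      have "cmod (cinner y (\<omega>1 x) + cinner v (\<omega>2 x))
          \<le> cmod (cinner y (\<omega>1 x)) + cmod (cinner v (\<omega>2 x))"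
        by (rule norm_triangle_ineq)
      also have "\<dots> \<le> norm y * norm (\<omega>1 x) + norm v * norm (\<omega>2 x)"
        by (intro add_mono norm_cinner_le)
      also have "\<dots> \<le> norm y * norm x + norm v * norm x"
        using norm_\<omega>1_le[OF x] norm_\<omega>2_le[OF x] by (intro add_mono mult_left_mono) auto
      finally show ?thesis by (simp add: algebra_simps)
    qed
  qed
  then have "\<exists>f. f \<in> F \<and> (\<forall>x\<in>F. cinner f x = cinner y (\<omega>1 x) + cinner v (\<omega>2 x))" by metis
  then show ?thesis unfolding \<omega>_adjoint_def by (rule someI_ex)
qed

lemma \<omega>_adjoint_in_F: "\<omega>_adjoint y v \<in> F" using \<omega>_adjoint_char by blast
lemma cinner_\<omega>_adjoint:
  "x \<in> F \<Longrightarrow> cinner (\<omega>_adjoint y v) x = cinner y (\<omega>1 x) + cinner v (\<omega>2 x)"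
  using \<omega>_adjoint_char by blast

lemma Gamma_adjoint_recursion:
  assumes g: "l2_seq \<gamma>"
  shows "Gamma_adjoint \<gamma> = \<omega>_adjoint (\<gamma> 0) (Gamma_adjoint (\<lambda>n. \<gamma> (Suc n)))"
proof (rule cinner_ext_left)
  fix u
  have g': "l2_seq (\<lambda>n. \<gamma> (Suc n))" by (rule l2_seq_Suc[OF g])
  have "cinner (Gamma_adjoint \<gamma>) u = l2_inner \<gamma> (\<lambda>n. Hc_coeff n u)"
    by (rule cinner_Gamma_adjoint[OF g])
  also have "\<dots> = cinner (\<gamma> 0) (Hc_coeff 0 u)
      + l2_inner (\<lambda>n. \<gamma> (Suc n)) (\<lambda>n. Hc_coeff (Suc n) u)"
    by (rule l2_inner_split_head[OF g C.coeff_l2_seq])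
  also have "\<dots> = cinner (\<gamma> 0) (\<omega>1 (P u))
      + l2_inner (\<lambda>n. \<gamma> (Suc n)) (\<lambda>n. Hc_coeff n (\<omega>2 (P u)))"
    by (simp add: C.coeff_0 C.coeff_Suc \<omega>1P_def \<omega>2P_def)
  also have "\<dots> = cinner (\<gamma> 0) (\<omega>1 (P u)) + cinner (Gamma_adjoint (\<lambda>n. \<gamma> (Suc n))) (\<omega>2 (P u))"
    by (simp add: cinner_Gamma_adjoint[OF g'])
  also have "\<dots> = cinner (\<omega>_adjoint (\<gamma> 0) (Gamma_adjoint (\<lambda>n. \<gamma> (Suc n)))) (P u)"
    by (simp add: cinner_\<omega>_adjoint orth_proj_in)
  also have "\<dots> = cinner (\<omega>_adjoint (\<gamma> 0) (Gamma_adjoint (\<lambda>n. \<gamma> (Suc n)))) u"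
    by (rule cinner_orth_proj[OF \<omega>_adjoint_in_F])
  finally show "cinner (Gamma_adjoint \<gamma>) u
      = cinner (\<omega>_adjoint (\<gamma> 0) (Gamma_adjoint (\<lambda>n. \<gamma> (Suc n)))) u" .
qed

definition defect where "defect y v = (norm y)\<^sup>2 + (norm v)\<^sup>2 - (norm (\<omega>_adjoint y v))\<^sup>2"

lemma norm_\<omega>_adjoint_sq:
  "(norm (\<omega>_adjoint y v))\<^sup>2 = Re (cinner y (\<omega>1 (\<omega>_adjoint y v)) + cinner v (\<omega>2 (\<omega>_adjoint y v)))"
  using cinner_\<omega>_adjoint[OF \<omega>_adjoint_in_F, of y v y v] by (simp add: norm_sq_cinner)

lemma defect_nonneg: "defect y v \<ge> 0"
proof -
  define f where "f = \<omega>_adjoint y v"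
  have fF: "f \<in> F" by (simp add: f_def \<omega>_adjoint_in_F)
  define p where "p = norm f"
  define a where "a = norm (\<omega>1 f)"
  define b where "b = norm (\<omega>2 f)"
  have ab: "a\<^sup>2 + b\<^sup>2 \<le> p\<^sup>2" using contrF fF by (simp add: a_def b_def p_def)
  have "p\<^sup>2 = Re (cinner y (\<omega>1 f) + cinner v (\<omega>2 f))" unfolding p_def f_def
    by (rule norm_\<omega>_adjoint_sq)
  also have "\<dots> \<le> cmod (cinner y (\<omega>1 f) + cinner v (\<omega>2 f))" by (rule complex_Re_le_cmod)
  also have "\<dots> \<le> cmod (cinner y (\<omega>1 f)) + cmod (cinner v (\<omega>2 f))" by (rule norm_triangle_ineq)
  also have "\<dots> \<le> norm y * a + norm v * b" unfolding a_def b_def by (intro add_mono norm_cinner_le)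
  finally have h: "p\<^sup>2 \<le> norm y * a + norm v * b" .
  have "(p\<^sup>2)\<^sup>2 \<le> (norm y * a + norm v * b)\<^sup>2" using h by (intro power_mono) auto
  also have "\<dots> \<le> ((norm y)\<^sup>2 + (norm v)\<^sup>2) * (a\<^sup>2 + b\<^sup>2)" by (rule Cauchy_Schwarz_real2)
  also have "\<dots> \<le> ((norm y)\<^sup>2 + (norm v)\<^sup>2) * p\<^sup>2" using ab by (intro mult_left_mono) auto
  finally have h2: "(p\<^sup>2)\<^sup>2 \<le> ((norm y)\<^sup>2 + (norm v)\<^sup>2) * p\<^sup>2" .
  then have "p\<^sup>2 \<le> (norm y)\<^sup>2 + (norm v)\<^sup>2" by (rule le_if_square_le_mult) simp_all
  then show ?thesis by (simp add: defect_def p_def f_def)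
qed

lemma norm_Gamma_adjoint_recursion:
  "l2_seq \<gamma> \<Longrightarrow> (norm (Gamma_adjoint \<gamma>))\<^sup>2 = (norm (\<gamma> 0))\<^sup>2
    + (norm (Gamma_adjoint (\<lambda>n. \<gamma> (Suc n))))\<^sup>2 - defect (\<gamma> 0) (Gamma_adjoint (\<lambda>n. \<gamma> (Suc n)))"
  using Gamma_adjoint_recursion by (simp add: defect_def)

end

section \<open>Vanishing defect makes \<Gamma>_{H_c} a co-isometry\<close>

context interp_data
begin

lemma h2_inner_Gamma_Hc:
  assumes "in_H2 g"
  shows "h2_inner (Gamma Hc u) g = cinner u (Gamma_adjoint (h2_coeff g))"
proof -
  have hg: "h2_coeffs g (h2_coeff g)" by (rule h2_coeffs_h2_coeff[OF assms])
  have gs: "l2_seq (h2_coeff g)" by (rule h2_coeffs_l2_seq[OF hg])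
  have "h2_inner (Gamma Hc u) g = l2_inner (\<lambda>n. Hc_coeff n u) (h2_coeff g)"
    by (rule h2_inner_eq[OF C.h2_coeffs_transfer_fun hg])
  also have "\<dots> = cnj (l2_inner (h2_coeff g) (\<lambda>n. Hc_coeff n u))"
    by (rule l2_inner_commute[OF gs C.coeff_l2_seq])
  also have "\<dots> = cinner u (Gamma_adjoint (h2_coeff g))"
    by (simp add: cinner_Gamma_adjoint[OF gs] cinner_commute[of u])
  finally show ?thesis .
qed

lemma Hc_coeff_Gamma_adjoint_if_isometric:
  assumes g: "l2_seq \<gamma>" and iso: "(norm (Gamma_adjoint \<gamma>))\<^sup>2 = l2_norm2 \<gamma>"
  shows "Hc_coeff n (Gamma_adjoint \<gamma>) = \<gamma> n"
proof -
  define x where "x = Gamma_adjoint \<gamma>"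
  have cs: "l2_seq (\<lambda>n. Hc_coeff n x - \<gamma> n)" by (rule l2_seq_diff[OF C.coeff_l2_seq g])
  have "Re (l2_inner (\<lambda>n. Hc_coeff n x) \<gamma>) = Re (cnj (cinner x x))"
    by (simp add: l2_inner_commute[OF g C.coeff_l2_seq] cinner_Gamma_adjoint[OF g] x_def)
  then have "Re (l2_inner (\<lambda>n. Hc_coeff n x) \<gamma>) = (norm x)\<^sup>2" by (simp add: cinner_self_norm)
  then have "l2_norm2 (\<lambda>n. Hc_coeff n x - \<gamma> n) \<le> 0"
    using l2_norm2_diff[OF C.coeff_l2_seq g] iso C.coeff_l2_norm2_le[of x] by (simp add: x_def)
  then have "l2_norm2 (\<lambda>n. Hc_coeff n x - \<gamma> n) = 0" using l2_norm2_nonneg[OF cs] by linarith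
  then show ?thesis using l2_norm2_eq_0_iff[OF cs] by (simp add: x_def)
qed

lemma norm_Gamma_adjoint_partial_sums:
  assumes dz: "\<And>\<gamma>. l2_seq \<gamma> \<Longrightarrow> defect (\<gamma> 0) (Gamma_adjoint (\<lambda>n. \<gamma> (Suc n))) = 0"
  shows "l2_seq \<gamma> \<Longrightarrow>
    (norm (Gamma_adjoint \<gamma>))\<^sup>2 = (\<Sum>k<N. (norm (\<gamma> k))\<^sup>2) + (norm (Gamma_adjoint (\<lambda>n. \<gamma> (n + N))))\<^sup>2"
proof (induction N arbitrary: \<gamma>)
  case 0 then show ?case by simp
next
  case (Suc N)
  have "(norm (Gamma_adjoint \<gamma>))\<^sup>2 = (norm (\<gamma> 0))\<^sup>2 + (norm (Gamma_adjoint (\<lambda>n. \<gamma> (Suc n))))\<^sup>2"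
    using norm_Gamma_adjoint_recursion[OF Suc.prems] dz[OF Suc.prems] by simp
  also have "(norm (Gamma_adjoint (\<lambda>n. \<gamma> (Suc n))))\<^sup>2
      = (\<Sum>k<N. (norm (\<gamma> (Suc k)))\<^sup>2) + (norm (Gamma_adjoint (\<lambda>n. \<gamma> (Suc (n + N)))))\<^sup>2"
    using Suc.IH[OF l2_seq_Suc[OF Suc.prems]] by simp
  finally show ?case unfolding sum.lessThan_Suc_shift add_Suc_right by simp
qed

lemma norm_Gamma_adjoint_if_defect_zero:
  assumes dz: "\<And>\<gamma>. l2_seq \<gamma> \<Longrightarrow> defect (\<gamma> 0) (Gamma_adjoint (\<lambda>n. \<gamma> (Suc n))) = 0"
    and g: "l2_seq \<gamma>"
  shows "(norm (Gamma_adjoint \<gamma>))\<^sup>2 = l2_norm2 \<gamma>"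
proof (rule antisym)
  show "(norm (Gamma_adjoint \<gamma>))\<^sup>2 \<le> l2_norm2 \<gamma>" by (rule norm_Gamma_adjoint_le[OF g])
  show "l2_norm2 \<gamma> \<le> (norm (Gamma_adjoint \<gamma>))\<^sup>2"
    unfolding l2_norm2_def
  proof (rule suminf_le_const)
    show "summable (\<lambda>n. (norm (\<gamma> n))\<^sup>2)" using g by (simp add: l2_seq_def)
    show "(\<Sum>k<N. (norm (\<gamma> k))\<^sup>2) \<le> (norm (Gamma_adjoint \<gamma>))\<^sup>2" for N
      using norm_Gamma_adjoint_partial_sums[OF dz g, of N] by simp
  qed
qed

lemma Gamma_coisometry_Hc_if_defect_zero:
  assumes dz: "\<And>\<gamma>. l2_seq \<gamma> \<Longrightarrow> defect (\<gamma> 0) (Gamma_adjoint (\<lambda>n. \<gamma> (Suc n))) = 0"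
  shows "Gamma_coisometry Hc"
  unfolding Gamma_coisometry_def
proof (intro conjI exI[of _ "\<lambda>g. Gamma_adjoint (h2_coeff g)"] allI impI ballI)
  show "in_frakH2 Hc" using C.transfer_fun_in_frakH2_ball by (simp add: in_frakH2_ball_def)
  show "h2_inner (Gamma Hc u) g = cinner u (Gamma_adjoint (h2_coeff g))" if "in_H2 g" for g u
    using that by (rule h2_inner_Gamma_Hc)
  fix g :: "complex \<Rightarrow> 'y" and z :: complex assume ig: "in_H2 g" and z: "z \<in> ball 0 1"
  have hg: "h2_coeffs g (h2_coeff g)" by (rule h2_coeffs_h2_coeff[OF ig])
  have gs: "l2_seq (h2_coeff g)" by (rule h2_coeffs_l2_seq[OF hg])
  have "h2_coeffs (Gamma Hc (Gamma_adjoint (h2_coeff g))) (h2_coeff g)"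
    using C.h2_coeffs_transfer_fun[of "Gamma_adjoint (h2_coeff g)"]
      Hc_coeff_Gamma_adjoint_if_isometric[OF gs norm_Gamma_adjoint_if_defect_zero[OF dz gs]]
    by simp
  from h2_coeffs_eq_on_disc[OF this hg z] show "Gamma Hc (Gamma_adjoint (h2_coeff g)) z = g z" .
qed

section \<open>A positive defect yields a second solution\<close>

lemma exists_unit_orthogonal: "\<exists>e. norm e = 1 \<and> (\<forall>f\<in>F. cinner e f = 0)"
proof -
  obtain u0 where u0: "u0 \<notin> F" using ne by blast
  define e' where "e' = u0 - P u0"
  have "e' \<noteq> 0" using orth_proj_in[of u0] u0 by (auto simp: e'_def)
  moreover have "cinner e' f = 0" if "f \<in> F" for f unfolding e'_def
    by (rule orth_proj_orth'[OF that])
  ultimately show ?thesis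
    by (intro exI[of _ "complex_of_real (1 / norm e') *\<^sub>C e'"])
      (simp add: norm_scaleC norm_divide cinner_scaleC_left)
qed

lemma defect_extension_contractive:
  assumes d: "defect y v > 0" and a: "a \<in> F"
    and f_def: "f = \<omega>_adjoint y v" and r_def: "r = complex_of_real (1 / sqrt (defect y v))"
  shows "(norm (\<omega>1 a + s *\<^sub>C r *\<^sub>C (y - \<omega>1 f)))\<^sup>2 + (norm (\<omega>2 a + s *\<^sub>C r *\<^sub>C (v - \<omega>2 f)))\<^sup>2
    \<le> (norm a)\<^sup>2 + (cmod s)\<^sup>2"
proof -
  have fF: "f \<in> F" by (simp add: f_def \<omega>_adjoint_in_F)
  define t where "t = s * r"
  \<comment> \<open>split a = b + t f; the inequality then reduces to contractivity of \<omega> at b\<close>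
  define b where "b = a - t *\<^sub>C f"
  have bF: "b \<in> F" using a fF sub by (simp add: b_def csubspace_diff csubspace_scaleC)
  have tf: "t *\<^sub>C f \<in> F" using fF sub by (simp add: csubspace_scaleC)
  have wb1: "\<omega>1 b = \<omega>1 a - t *\<^sub>C \<omega>1 f" by (simp add: b_def \<omega>1_diff[OF a tf] \<omega>1_scaleC[OF fF])
  have wb2: "\<omega>2 b = \<omega>2 a - t *\<^sub>C \<omega>2 f" by (simp add: b_def \<omega>2_diff[OF a tf] \<omega>2_scaleC[OF fF])
  have e1: "\<omega>1 a + s *\<^sub>C r *\<^sub>C (y - \<omega>1 f) = \<omega>1 b + t *\<^sub>C y"
    by (simp add: wb1 t_def scaleC_scaleC scaleC_diff_right)
  have e2: "\<omega>2 a + s *\<^sub>C r *\<^sub>C (v - \<omega>2 f) = \<omega>2 b + t *\<^sub>C v"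
    by (simp add: wb2 t_def scaleC_scaleC scaleC_diff_right)
  have S: "cinner (\<omega>1 b) y + cinner (\<omega>2 b) v = cinner b f"
  proof -
    have "cinner f b = cinner y (\<omega>1 b) + cinner v (\<omega>2 b)" unfolding f_def
      by (rule cinner_\<omega>_adjoint[OF bF])
    then have "cnj (cinner f b) = cnj (cinner y (\<omega>1 b)) + cnj (cinner v (\<omega>2 b))" by simp
    then show ?thesis by (metis cinner_commute)
  qed
  have sum_Re: "Re (t * cinner (\<omega>1 b) y) + Re (t * cinner (\<omega>2 b) v) = Re (t * cinner b f)"
    by (simp only: S[symmetric] distrib_left plus_complex.sel)
  have Re_bf: "Re (t * cinner b f) = Re (t * cinner a f) - (cmod t)\<^sup>2 * (norm f)\<^sup>2"
  proof -
    have "t * cinner b f = t * cinner a f - (t * cnj t) * cinner f f"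
      by (simp add: b_def cinner_diff_left cinner_scaleC_left algebra_simps)
    also have "t * cnj t = complex_of_real ((cmod t)\<^sup>2)" by (rule complex_norm_square[symmetric])
    finally show ?thesis by (simp add: cinner_self_norm)
  qed
  have contr_b: "(norm (\<omega>1 b))\<^sup>2 + (norm (\<omega>2 b))\<^sup>2 \<le> (norm b)\<^sup>2" using contrF bF by blast
  have "cmod t = cmod s / sqrt (defect y v)" using d
    by (simp add: t_def r_def norm_mult norm_divide)
  then have "(cmod t)\<^sup>2 * defect y v = (cmod s)\<^sup>2" using d by (simp add: power_divide)
  then have "(cmod t)\<^sup>2 * (norm y)\<^sup>2 + (cmod t)\<^sup>2 * (norm v)\<^sup>2 - (cmod t)\<^sup>2 * (norm f)\<^sup>2
      = (cmod s)\<^sup>2"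
    by (simp add: defect_def f_def algebra_simps)
  then show ?thesis
    unfolding e1 e2 norm_add_scaleC_sq using sum_Re Re_bf contr_b norm_diff_scaleC_sq[of a t f]
    by (simp add: b_def)
qed

lemma rank_one_extension_colligation:
  assumes e: "norm e = 1" "\<forall>f\<in>F. cinner e f = 0"
    and contr: "\<And>a s. a \<in> F \<Longrightarrow>
      (norm (\<omega>1 a + s *\<^sub>C k1))\<^sup>2 + (norm (\<omega>2 a + s *\<^sub>C k2))\<^sup>2 \<le> (norm a)\<^sup>2 + (cmod s)\<^sup>2"
  shows "contractive_colligation
    (\<lambda>u. \<omega>1 (P u) + cinner e u *\<^sub>C k1) (\<lambda>u. \<omega>2 (P u) + cinner e u *\<^sub>C k2)"
proof
  show "clinear_on UNIV (\<lambda>u. \<omega>1 (P u) + cinner e u *\<^sub>C k1)"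
    unfolding clinear_on_def
    by (simp add: orth_proj_add orth_proj_scaleC \<omega>1_add \<omega>1_scaleC orth_proj_in cinner_add_right
        cinner_scaleC_right scaleC_add_left scaleC_add_right scaleC_scaleC algebra_simps)
  show "clinear_on UNIV (\<lambda>u. \<omega>2 (P u) + cinner e u *\<^sub>C k2)"
    unfolding clinear_on_def
    by (simp add: orth_proj_add orth_proj_scaleC \<omega>2_add \<omega>2_scaleC orth_proj_in cinner_add_right
        cinner_scaleC_right scaleC_add_left scaleC_add_right scaleC_scaleC algebra_simps)
  fix u
  have "cinner e u = cinner e (u - P u)" using e orth_proj_in by (simp add: cinner_diff_right)
  then have "cmod (cinner e u) \<le> norm (u - P u)" using norm_cinner_le[of e "u - P u"] e by simp
  then have "(cmod (cinner e u))\<^sup>2 \<le> (norm (u - P u))\<^sup>2" by (simp add: power_mono)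
  then show "(norm (\<omega>1 (P u) + cinner e u *\<^sub>C k1))\<^sup>2 + (norm (\<omega>2 (P u) + cinner e u *\<^sub>C k2))\<^sup>2
      \<le> (norm u)\<^sup>2"
    using contr[OF orth_proj_in, of u "cinner e u"] orth_proj_pythagoras[of u] by linarith
qed

lemma rank_one_extension_trivial_if_unique:
  assumes uniq: "\<forall>H. H2_interp_solution F \<omega>1 \<omega>2 H \<longrightarrow> (\<forall>z\<in>ball 0 1. H z = Hc z)"
    and e: "norm e = 1" "\<forall>f\<in>F. cinner e f = 0"
    and contr: "\<And>a s. a \<in> F \<Longrightarrow>
      (norm (\<omega>1 a + s *\<^sub>C k1))\<^sup>2 + (norm (\<omega>2 a + s *\<^sub>C k2))\<^sup>2 \<le> (norm a)\<^sup>2 + (cmod s)\<^sup>2"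
  shows "k1 = 0 \<and> (\<forall>n. Hc_coeff n k2 = 0)"
proof -
  define t1 where "t1 u = \<omega>1 (P u) + cinner e u *\<^sub>C k1" for u
  define t2 where "t2 u = \<omega>2 (P u) + cinner e u *\<^sub>C k2" for u
  interpret T: contractive_colligation t1 t2
    unfolding t1_def t2_def by (rule rank_one_extension_colligation[OF e contr])
  have "H2_interp_solution F \<omega>1 \<omega>2 (transfer_fun t1 t2)"
    using e(2) by (intro T.transfer_fun_interp_solution) (simp add: t1_def t2_def orth_proj_id)
  then have Hc_eq: "\<And>z. z \<in> ball 0 1 \<Longrightarrow> transfer_fun t1 t2 z = Hc z" using uniq by blast
  have coeff_eq: "transfer_coeff t1 t2 n u = Hc_coeff n u" for n u
  proof -
    have "h2_coeffs (Gamma Hc u) (\<lambda>n. transfer_coeff t1 t2 n u)"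
      using T.h2_coeffs_transfer_fun[of u] h2_coeffs_Gamma_cong[OF Hc_eq] by simp
    from h2_coeffs_unique[OF this C.h2_coeffs_transfer_fun] show ?thesis by (simp add: fun_eq_iff)
  qed
  \<comment> \<open>the coefficients of H_c vanish at e, since e is orthogonal to F\<close>
  have Pe: "P e = 0" using e(2) by (intro orth_proj_eq_0_if_orth) auto
  have "t1 e = k1" and "t2 e = k2" using Pe e(1)
    by (simp_all add: t1_def t2_def \<omega>1_zero \<omega>2_zero cinner_self_norm scaleC_one)
  then show ?thesis
    using coeff_eq[of 0 e] coeff_eq[of _ k2] coeff_eq[of "Suc _" e] Hc_coeff_eq_0_if_orth[OF Pe]
    by (simp add: T.coeff_0 T.coeff_Suc)
qed

lemma defect_zero_if_unique:
  assumes uniq: "\<forall>H. H2_interp_solution F \<omega>1 \<omega>2 H \<longrightarrow> (\<forall>z\<in>ball 0 1. H z = Hc z)"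
    and g: "l2_seq \<gamma>"
  shows "defect (\<gamma> 0) (Gamma_adjoint (\<lambda>n. \<gamma> (Suc n))) = 0"
proof (rule ccontr)
  define y where "y = \<gamma> 0"
  define v where "v = Gamma_adjoint (\<lambda>n. \<gamma> (Suc n))"
  define f where "f = \<omega>_adjoint y v"
  define r where "r = complex_of_real (1 / sqrt (defect y v))"
  assume "defect (\<gamma> 0) (Gamma_adjoint (\<lambda>n. \<gamma> (Suc n))) \<noteq> 0"
  then have d: "defect y v > 0" using defect_nonneg[of y v] by (simp add: y_def v_def)
  obtain e where e: "norm e = 1" "\<forall>f\<in>F. cinner e f = 0" using exists_unit_orthogonal by blast
  define k1 where "k1 = r *\<^sub>C (y - \<omega>1 f)"
  define k2 where "k2 = r *\<^sub>C (v - \<omega>2 f)"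
  have "k1 = 0 \<and> (\<forall>n. Hc_coeff n k2 = 0)"
    unfolding k1_def k2_def by (rule rank_one_extension_trivial_if_unique[OF uniq e])
      (use defect_extension_contractive[OF d _ f_def r_def] in blast)
  then have "k1 = 0" and "cinner v k2 = 0"
    using cinner_Gamma_adjoint[OF l2_seq_Suc[OF g], of k2] by (simp_all add: v_def l2_inner_def)
  moreover have "y - \<omega>1 f = complex_of_real (sqrt (defect y v)) *\<^sub>C k1"
    and "v - \<omega>2 f = complex_of_real (sqrt (defect y v)) *\<^sub>C k2"
    using d by (simp_all add: k1_def k2_def r_def scaleC_scaleC scaleC_one)
  ultimately have "cinner y (y - \<omega>1 f) + cinner v (v - \<omega>2 f) = 0"
    by (simp add: cinner_scaleC_right)
  moreover have "cinner y (y - \<omega>1 f) + cinner v (v - \<omega>2 f) = complex_of_real (defect y v)"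
    using cinner_\<omega>_adjoint[OF \<omega>_adjoint_in_F, of y v y v]
    by (simp add: cinner_diff_right cinner_self_norm defect_def f_def)
  ultimately show False using d by simp
qed

end

lemma (in interp_data) solution_eq_Hc_if_Gamma_coisometry:
  assumes "Gamma_coisometry Hc" and "H2_interp_solution F \<omega>1 \<omega>2 H" and "z \<in> ball 0 1"
  shows "H z = Hc z"
proof -
  obtain A where "\<forall>g u. in_H2 g \<longrightarrow> h2_inner (Gamma Hc u) g = cinner u (A g)"
    and "\<forall>g. in_H2 g \<longrightarrow> (\<forall>z\<in>ball 0 1. Gamma Hc (A g) z = g z)"
    using assms(1) unfolding Gamma_coisometry_def by blast
  then interpret Hc_coisometry_solution F \<omega>1 \<omega>2 A H
    using assms(2) by unfold_locales auto
  show ?thesis by (rule H_eq_Hc[OF assms(3)])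
qed

theorem corollary0p3:
  fixes F :: "'u::complex_hilbert set"
    and \<omega>1 :: "'u \<Rightarrow> 'y::complex_hilbert"
    and \<omega>2 :: "'u \<Rightarrow> 'u"
  assumes "csubspace F" and "closed F" and "F \<noteq> UNIV"
    and "clinear_on F \<omega>1" and "clinear_on F \<omega>2"
    and "\<forall>x\<in>F. (norm (\<omega>1 x))\<^sup>2 + (norm (\<omega>2 x))\<^sup>2 \<le> (norm x)\<^sup>2"
  shows "(H2_interp_solution F \<omega>1 \<omega>2 (central_solution F \<omega>1 \<omega>2) \<and>
          (\<forall>H. H2_interp_solution F \<omega>1 \<omega>2 H \<longrightarrow>
                (\<forall>z\<in>ball 0 1. H z = central_solution F \<omega>1 \<omega>2 z)))
         \<longleftrightarrow> Gamma_coisometry (central_solution F \<omega>1 \<omega>2)"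
proof -
  interpret interp_data F \<omega>1 \<omega>2 using assms by unfold_locales
  have Hc_eq: "\<And>z. z \<in> ball 0 1 \<Longrightarrow> central_solution F \<omega>1 \<omega>2 z = Hc z"
    by (rule central_solution_eq_Hc)
  have "(\<forall>H. H2_interp_solution F \<omega>1 \<omega>2 H \<longrightarrow> (\<forall>z\<in>ball 0 1. H z = Hc z)) \<longleftrightarrow> Gamma_coisometry Hc"
  proof
    assume "\<forall>H. H2_interp_solution F \<omega>1 \<omega>2 H \<longrightarrow> (\<forall>z\<in>ball 0 1. H z = Hc z)"
    then show "Gamma_coisometry Hc"
      by (intro Gamma_coisometry_Hc_if_defect_zero defect_zero_if_unique)
  qed (blast intro: solution_eq_Hc_if_Gamma_coisometry)
  then show ?thesis
    using H2_interp_solution_cong[OF Hc_eq] Gamma_coisometry_cong[OF Hc_eq] Hc_interp_solution Hc_eq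
    by auto
qed

end
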